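(* Let $E$ be a Dedekind complete Riesz space with a weak order unit $e$, and let $(f_n)_{n\in\mathbb{N}_0}$ be an order bounded sequence in the positive cone $E_+$. Then $\frac{1}{n}\sum_{k=0}^{n-1}f_k\to 0$ in order as $n\to\infty$ if and only if there exists a density zero sequence of band projections $(P_n)_{n\in\mathbb{N}_0}$ on $E$ such that $(I-P_n)f_n\to 0$ in order as $n\to\infty$.
   Context: A sequence $(P_n)_{n\in\mathbb{N}_0}$ of band projections on a Riesz space $E$ is said to be of density zero if $\frac{1}{n}\sum_{k=0}^{n-1}P_k\to 0$ in order as $n\to\infty$ (order convergence in the space of order bounded operators on $E$). $I$ denotes the identity operator on $E$. *)

theory Defs
  imports Complex_Main
begin

text \<open>A Riesz space is modelled by a type of class ordered_real_vector that is also a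
lattice; Dedekind completeness (every nonempty order bounded above set has a supremum)
is modelled by the class conditionally_complete_lattice.\<close>

definition rabs :: "'a::{ordered_real_vector,lattice} \<Rightarrow> 'a" where
  "rabs x = sup x (- x)"

definition rdisj :: "'a::{ordered_real_vector,lattice} \<Rightarrow> 'a \<Rightarrow> bool" where
  "rdisj x y \<longleftrightarrow> inf (rabs x) (rabs y) = 0"

definition disj_compl :: "'a::{ordered_real_vector,lattice} set \<Rightarrow> 'a set" where
  "disj_compl B = {x. \<forall>y\<in>B. rdisj x y}"

definition riesz_ideal :: "'a::{ordered_real_vector,lattice} set \<Rightarrow> bool" where
  "riesz_ideal B \<longleftrightarrow> 0 \<in> B \<and> (\<forall>x\<in>B. \<forall>y\<in>B. x + y \<in> B) \<and> (\<forall>c x. x \<in> B \<longrightarrow> c *\<^sub>R x \<in> B)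
     \<and> (\<forall>x y. y \<in> B \<and> rabs x \<le> rabs y \<longrightarrow> x \<in> B)"

definition band :: "'a::{ordered_real_vector,conditionally_complete_lattice} set \<Rightarrow> bool" where
  "band B \<longleftrightarrow> riesz_ideal B \<and> (\<forall>A. A \<subseteq> B \<and> A \<noteq> {} \<and> bdd_above A \<longrightarrow> Sup A \<in> B)"

definition band_projection :: "('a::{ordered_real_vector,conditionally_complete_lattice} \<Rightarrow> 'a) \<Rightarrow> bool" where
  "band_projection P \<longleftrightarrow> (\<exists>B. band B \<and> (\<forall>x. P x \<in> B \<and> x - P x \<in> disj_compl B))"

definition weak_order_unit :: "'a::{ordered_real_vector,lattice} \<Rightarrow> bool" where
  "weak_order_unit e \<longleftrightarrow> 0 \<le> e \<and> (\<forall>x. rdisj x e \<longrightarrow> x = 0)"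

definition order_convergent :: "(nat \<Rightarrow> 'a::{ordered_real_vector,lattice}) \<Rightarrow> 'a \<Rightarrow> bool" where
  "order_convergent x l \<longleftrightarrow> (\<exists>y. decseq y \<and> (\<forall>n. 0 \<le> y n)
      \<and> (\<forall>z. (\<forall>n. z \<le> y n) \<longrightarrow> z \<le> 0) \<and> (\<forall>n. rabs (x n - l) \<le> y n))"

definition order_bounded_op :: "('a::{ordered_real_vector,lattice} \<Rightarrow> 'a) \<Rightarrow> bool" where
  "order_bounded_op T \<longleftrightarrow> linear T \<and>
     (\<forall>a b. \<exists>c d. \<forall>x. a \<le> x \<and> x \<le> b \<longrightarrow> c \<le> T x \<and> T x \<le> d)"

definition op_le :: "('a::{ordered_real_vector,lattice} \<Rightarrow> 'a) \<Rightarrow> ('a \<Rightarrow> 'a) \<Rightarrow> bool" where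
  "op_le T S \<longleftrightarrow> (\<forall>x. 0 \<le> x \<longrightarrow> T x \<le> S x)"

text \<open>Order convergence in L_b(E): there are Y n in L_b(E) decreasing with infimum 0 in L_b(E)
  and -Y n \<le> T n - L \<le> Y n (i.e. |T n - L| \<le> Y n).\<close>
definition op_order_convergent ::
  "(nat \<Rightarrow> 'a::{ordered_real_vector,lattice} \<Rightarrow> 'a) \<Rightarrow> ('a \<Rightarrow> 'a) \<Rightarrow> bool" where
  "op_order_convergent T L \<longleftrightarrow> (\<exists>Y. (\<forall>n. order_bounded_op (Y n))
      \<and> (\<forall>n. op_le (Y (Suc n)) (Y n)) \<and> (\<forall>n. op_le (\<lambda>x. 0) (Y n))
      \<and> (\<forall>S. order_bounded_op S \<and> (\<forall>n. op_le S (Y n)) \<longrightarrow> op_le S (\<lambda>x. 0))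
      \<and> (\<forall>n. op_le (\<lambda>x. T n x - L x) (Y n) \<and> op_le (\<lambda>x. L x - T n x) (Y n)))"

definition density_zero :: "(nat \<Rightarrow> 'a::{ordered_real_vector,lattice} \<Rightarrow> 'a) \<Rightarrow> bool" where
  "density_zero P \<longleftrightarrow> op_order_convergent (\<lambda>n x. (1 / real n) *\<^sub>R (\<Sum>k<n. P k x)) (\<lambda>x. 0)"

end

theory Submission
  imports Defs "HOL-Library.Lattice_Algebras"
begin

text \<open>
  Suppose the Cesaro means of \<open>f\<close> are dominated by a sequence \<open>y n\<close> decreasing to \<open>0\<close>. Let
  \<open>T j n\<close> project onto the band generated by \<open>(y n - 4^-j e)\<^sup>+\<close> and put
  \<open>Y n = 2^-n I + (\<Sum>j<n. 2^-(j+1) T (j+1) n)\<close>. These positive operators decrease to \<open>0\<close>, because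
  \<open>y n\<close> does and \<open>e\<close> is a weak unit. Let \<open>P n\<close> project onto the band of \<open>(f n - Y n e)\<^sup>+\<close>;
  then \<open>(I - P n) (f n) \<le> Y n e\<close>, which decreases to \<open>0\<close>. Between \<open>T j n\<close> and \<open>T (j+1) n\<close> the
  operator \<open>Y n\<close> is multiplication by \<open>2^-j\<close> and \<open>y n \<le> 4^-j e\<close>, while the mean \<open>D n\<close> of
  \<open>P 0, \<dots>, P (n-1)\<close> satisfies \<open>D n (Y n e) \<le> y n\<close>; hence \<open>D n e \<le> Y n e\<close>. As \<open>Y n - D n\<close> is a
  combination of commuting band projections, positivity at the weak unit \<open>e\<close> gives \<open>D n \<le> Y n\<close>,
  so the \<open>P n\<close> have density zero.

  Conversely, split \<open>f k = P k (f k) + (I - P k) (f k)\<close>: if \<open>b\<close> bounds \<open>f\<close>, the means of the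
  first parts are at most \<open>D n b\<close>, and those of the second parts are Cesaro means of an order
  null sequence.
\<close>

interpretation riesz: lattice_ab_group_add_abs rabs "(+)" "0::'a::{ordered_real_vector,lattice}"
  "(-)" uminus "(\<le>)" "(<)" inf sup
  by unfold_locales (simp add: rabs_def)

section \<open>Riesz space arithmetic\<close>

lemma pprt_minus_pprt_neg: "riesz.pprt x - riesz.pprt (- x) = (x::'a::{ordered_real_vector,lattice})"
  using riesz.prts[of x] by (simp add: riesz.pprt_neg)

lemma abs_eq_pprt_add_pprt_neg: "rabs x = riesz.pprt x + riesz.pprt (- (x::'a::{ordered_real_vector,lattice}))"
  unfolding riesz.abs_prts riesz.pprt_neg by simp

lemma pprt_le_abs: "riesz.pprt x \<le> rabs (x::'a::{ordered_real_vector,lattice})"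
  using riesz.zero_le_pprt[of "- x"] by (simp add: abs_eq_pprt_add_pprt_neg)

lemma pprt_neg_le_abs: "riesz.pprt (- x) \<le> rabs (x::'a::{ordered_real_vector,lattice})"
  using riesz.zero_le_pprt[of x] by (simp add: abs_eq_pprt_add_pprt_neg)

lemma diff_pprt_eq_nprt: "x - riesz.pprt x = riesz.nprt (x::'a::{ordered_real_vector,lattice})"
  using riesz.prts[of x] by (metis add_diff_cancel_left')

lemma inf_pprt_pprt_neg: "inf (riesz.pprt x) (riesz.pprt (- x)) = (0::'a::{ordered_real_vector,lattice})"
proof -
  have "inf (riesz.pprt x) (riesz.pprt x - x) = riesz.pprt x + inf 0 (- x)"
    using riesz.add_inf_distrib_left[of "riesz.pprt x" 0 "- x"] by simp
  also have "\<dots> = riesz.pprt x - sup 0 x" using riesz.neg_sup_eq_inf[of 0 x] by simp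
  finally have "inf (riesz.pprt x) (riesz.pprt x - x) = 0" by (simp add: riesz.pprt_def sup_commute)
  then show ?thesis using pprt_minus_pprt_neg[of x] by (simp add: algebra_simps)
qed

lemma scaleR_sup_distrib:
  fixes a b :: "'a::{ordered_real_vector,lattice}"
  assumes "0 \<le> c"
  shows "c *\<^sub>R sup a b = sup (c *\<^sub>R a) (c *\<^sub>R b)"
proof (cases "c = 0")
  case False
  with assms have c: "0 < c" by simp
  have "sup a b \<le> (1 / c) *\<^sub>R sup (c *\<^sub>R a) (c *\<^sub>R b)"
  proof (rule sup_least)
    have "a = (1 / c) *\<^sub>R (c *\<^sub>R a)" using c by simp
    also have "\<dots> \<le> (1 / c) *\<^sub>R sup (c *\<^sub>R a) (c *\<^sub>R b)" using c by (intro scaleR_left_mono) auto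
    finally show "a \<le> (1 / c) *\<^sub>R sup (c *\<^sub>R a) (c *\<^sub>R b)" .
    have "b = (1 / c) *\<^sub>R (c *\<^sub>R b)" using c by simp
    also have "\<dots> \<le> (1 / c) *\<^sub>R sup (c *\<^sub>R a) (c *\<^sub>R b)" using c by (intro scaleR_left_mono) auto
    finally show "b \<le> (1 / c) *\<^sub>R sup (c *\<^sub>R a) (c *\<^sub>R b)" .
  qed
  then have "c *\<^sub>R sup a b \<le> c *\<^sub>R ((1 / c) *\<^sub>R sup (c *\<^sub>R a) (c *\<^sub>R b))"
    using c by (intro scaleR_left_mono) auto
  with c have "c *\<^sub>R sup a b \<le> sup (c *\<^sub>R a) (c *\<^sub>R b)" by simp
  moreover have "sup (c *\<^sub>R a) (c *\<^sub>R b) \<le> c *\<^sub>R sup a b"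
    using assms by (intro sup_least scaleR_left_mono) auto
  ultimately show ?thesis by (rule antisym)
qed simp

lemma scaleR_inf_distrib:
  fixes a b :: "'a::{ordered_real_vector,lattice}"
  assumes "0 \<le> c"
  shows "c *\<^sub>R inf a b = inf (c *\<^sub>R a) (c *\<^sub>R b)"
proof -
  have "c *\<^sub>R inf a b = - (c *\<^sub>R sup (- a) (- b))"
    by (simp only: riesz.inf_eq_neg_sup[of a b] scaleR_minus_right)
  also have "\<dots> = inf (c *\<^sub>R a) (c *\<^sub>R b)"
    by (simp only: scaleR_sup_distrib[OF assms] scaleR_minus_right riesz.neg_sup_eq_inf minus_minus)
  finally show ?thesis .
qed

lemma pprt_scaleR: "0 \<le> c \<Longrightarrow> riesz.pprt (c *\<^sub>R x) = c *\<^sub>R riesz.pprt (x::'a::{ordered_real_vector,lattice})"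
  by (simp add: riesz.pprt_def scaleR_sup_distrib)

lemma abs_scaleR: "rabs (c *\<^sub>R x) = \<bar>c\<bar> *\<^sub>R rabs (x::'a::{ordered_real_vector,lattice})"
proof (cases "0 \<le> c")
  case True
  then show ?thesis by (simp add: rabs_def scaleR_sup_distrib)
next
  case False
  then have "rabs (c *\<^sub>R x) = (- c) *\<^sub>R rabs (- x)"
    unfolding rabs_def by (subst scaleR_sup_distrib) (simp_all add: sup_commute)
  with False show ?thesis by simp
qed

lemma inf_add_le_add_inf:
  fixes a b c :: "'a::{ordered_real_vector,lattice}"
  assumes "0 \<le> a" "0 \<le> b" "0 \<le> c"
  shows "inf (a + b) c \<le> inf a c + inf b c"
proof -
  have "inf a c + inf b c = inf (a + inf b c) (c + inf b c)" by (rule riesz.add_inf_distrib_right)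
  also have "\<dots> = inf (inf (a + b) (a + c)) (inf (c + b) (c + c))"
    by (simp only: riesz.add_inf_distrib_left)
  finally have "inf a c + inf b c = inf (inf (a + b) (a + c)) (inf (c + b) (c + c))" .
  moreover have "c \<le> a + c" "c \<le> c + b" "c \<le> c + c" using assms by (simp_all add: add_increasing)
  then have "inf (a + b) c \<le> inf (inf (a + b) (a + c)) (inf (c + b) (c + c))"
    by (intro le_infI) (auto intro: le_infI2)
  ultimately show ?thesis by simp
qed

lemma inf_cSup_distrib:
  fixes A :: "'a::{ordered_real_vector,conditionally_complete_lattice} set"
  assumes A: "A \<noteq> {}" "bdd_above A"
  shows "inf z (Sup A) = Sup (inf z ` A)"
proof (rule antisym)
  let ?s = "Sup A" and ?t = "Sup (inf z ` A)"
  have bdd: "bdd_above (inf z ` A)" by (rule bdd_aboveI[of _ z]) auto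
  have "a \<le> ?t + riesz.pprt (?s - z)" if a: "a \<in> A" for a
  proof -
    have "a - inf z a = riesz.pprt (a - z)"
      by (simp add: riesz.diff_inf_eq_sup riesz.add_sup_distrib_left riesz.pprt_def)
    also have "\<dots> \<le> riesz.pprt (?s - z)" using a A by (intro riesz.pprt_mono diff_right_mono cSup_upper)
    finally have "a \<le> riesz.pprt (?s - z) + inf z a" by (simp only: diff_le_eq)
    also have "\<dots> \<le> riesz.pprt (?s - z) + ?t" using a bdd by (intro add_left_mono cSUP_upper)
    finally show ?thesis by (simp only: add.commute)
  qed
  then have "?s \<le> ?t + riesz.pprt (?s - z)" using A by (intro cSup_least) auto
  moreover have "?s - riesz.pprt (?s - z) = inf z ?s"
    by (simp add: riesz.pprt_def riesz.diff_sup_eq_inf riesz.add_inf_distrib_left inf_commute)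
  ultimately show "inf z ?s \<le> ?t" by (metis diff_le_eq)
  show "?t \<le> inf z ?s" using A by (intro cSUP_least inf_mono cSup_upper) auto
qed

lemma pprt_cSup:
  fixes A :: "'a::{ordered_real_vector,conditionally_complete_lattice} set"
  assumes A: "A \<noteq> {}" "bdd_above A"
  shows "riesz.pprt (Sup A) = Sup (riesz.pprt ` A)"
proof -
  obtain M where M: "\<And>a. a \<in> A \<Longrightarrow> a \<le> M" using A(2) by (auto simp: bdd_above_def)
  have bdd: "bdd_above (riesz.pprt ` A)"
    by (rule bdd_aboveI[of _ "riesz.pprt M"]) (auto intro: M riesz.pprt_mono)
  obtain a0 where a0: "a0 \<in> A" using A by auto
  have "Sup A \<le> Sup (riesz.pprt ` A)"
    using A bdd by (intro cSup_least cSUP_upper2) (auto simp: riesz.pprt_def)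
  moreover have "0 \<le> Sup (riesz.pprt ` A)"
    using cSUP_upper[OF a0 bdd] riesz.zero_le_pprt[of a0] by (rule order_trans[rotated])
  ultimately have "riesz.pprt (Sup A) \<le> Sup (riesz.pprt ` A)" by (simp add: riesz.pprt_def)
  moreover have "Sup (riesz.pprt ` A) \<le> riesz.pprt (Sup A)"
    using A by (intro cSUP_least riesz.pprt_mono cSup_upper) auto
  ultimately show ?thesis by (rule antisym)
qed

lemma nonpos_if_multiples_bdd_above:
  fixes p x :: "'a::{ordered_real_vector,conditionally_complete_lattice}"
  assumes "\<And>n::nat. real n *\<^sub>R p \<le> x"
  shows "p \<le> 0"
proof -
  let ?A = "range (\<lambda>n::nat. real n *\<^sub>R p)"
  have bdd: "bdd_above ?A" using assms by (auto simp: bdd_above_def)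
  have "real n *\<^sub>R p \<le> Sup ?A - p" for n :: nat
  proof -
    have "real (Suc n) *\<^sub>R p \<le> Sup ?A" using bdd by (intro cSup_upper) blast+
    then show ?thesis by (simp add: algebra_simps)
  qed
  then have "Sup ?A \<le> Sup ?A - p" by (intro cSup_least) auto
  then show ?thesis by simp
qed

lemma nonpos_if_le_inverse_multiples:
  fixes p x :: "'a::{ordered_real_vector,conditionally_complete_lattice}"
  assumes le: "\<And>n. n \<ge> N \<Longrightarrow> p \<le> (1 / real n) *\<^sub>R x"
  shows "p \<le> 0"
proof -
  let ?M = "max N 1"
  have "real n *\<^sub>R riesz.pprt p \<le> real ?M *\<^sub>R riesz.pprt x" for n :: nat
  proof -
    let ?m = "max n ?M"
    have "real ?m *\<^sub>R p \<le> real ?m *\<^sub>R ((1 / real ?m) *\<^sub>R x)" using le[of ?m] by (intro scaleR_left_mono) auto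
    then have "real ?m *\<^sub>R p \<le> x" by simp
    then have "riesz.pprt (real ?m *\<^sub>R p) \<le> riesz.pprt x" by (rule riesz.pprt_mono)
    then have "real n *\<^sub>R riesz.pprt p \<le> riesz.pprt x"
      by (rule order_trans[rotated]) (simp add: pprt_scaleR scaleR_right_mono)
    also have "\<dots> \<le> real ?M *\<^sub>R riesz.pprt x"
      using scaleR_right_mono[of 1 "real ?M" "riesz.pprt x"] by simp
    finally show ?thesis .
  qed
  then have "riesz.pprt p \<le> 0" by (rule nonpos_if_multiples_bdd_above)
  then show ?thesis by (simp add: riesz.pprt_def)
qed

section \<open>Disjointness, ideals and bands\<close>

lemma rdisj_commute: "rdisj x y \<longleftrightarrow> rdisj y (x::'a::{ordered_real_vector,lattice})"
  by (simp add: rdisj_def inf_commute)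

lemma rdisjI: "inf (rabs x) (rabs y) \<le> 0 \<Longrightarrow> rdisj x (y::'a::{ordered_real_vector,lattice})"
  unfolding rdisj_def by (simp add: antisym)

lemma rdisj_zero_left: "rdisj 0 (y::'a::{ordered_real_vector,lattice})"
  by (simp add: rdisj_def inf_absorb1)

lemma rdisj_self_imp_zero: "rdisj x x \<Longrightarrow> x = (0::'a::{ordered_real_vector,lattice})"
  by (simp add: rdisj_def)

lemma rdisj_abs_le_left:
  "rabs z \<le> rabs x \<Longrightarrow> rdisj x y \<Longrightarrow> rdisj z (y::'a::{ordered_real_vector,lattice})"
  unfolding rdisj_def by (metis antisym inf_mono le_infI order_refl riesz.abs_ge_zero)

lemma rdisj_add_left:
  assumes "rdisj x z" "rdisj y z"
  shows "rdisj (x + y) (z::'a::{ordered_real_vector,lattice})"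
proof (rule rdisjI)
  have "inf (rabs (x + y)) (rabs z) \<le> inf (rabs x + rabs y) (rabs z)"
    by (intro inf_mono riesz.abs_triangle_ineq order_refl)
  also have "\<dots> \<le> inf (rabs x) (rabs z) + inf (rabs y) (rabs z)" by (simp add: inf_add_le_add_inf)
  finally show "inf (rabs (x + y)) (rabs z) \<le> 0" using assms by (simp add: rdisj_def)
qed

lemma rdisj_scaleR_left:
  assumes "rdisj x y"
  shows "rdisj (c *\<^sub>R x) (y::'a::{ordered_real_vector,lattice})"
proof (rule rdisjI)
  define m where "m = max \<bar>c\<bar> 1"
  have m: "0 \<le> m" "\<bar>c\<bar> \<le> m" "1 \<le> m" by (auto simp: m_def)
  have "inf (rabs (c *\<^sub>R x)) (rabs y) \<le> inf (m *\<^sub>R rabs x) (m *\<^sub>R rabs y)"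
    using m scaleR_right_mono[OF m(3), of "rabs y"]
    by (intro inf_mono) (auto simp: abs_scaleR intro: scaleR_right_mono)
  also have "\<dots> = 0" using assms by (simp add: rdisj_def scaleR_inf_distrib[OF m(1), symmetric])
  finally show "inf (rabs (c *\<^sub>R x)) (rabs y) \<le> 0" .
qed

lemma rdisj_cSup_left:
  fixes A :: "'a::{ordered_real_vector,conditionally_complete_lattice} set"
  assumes A: "A \<noteq> {}" "bdd_above A" and disj: "\<And>a. a \<in> A \<Longrightarrow> rdisj a y"
  shows "rdisj (Sup A) y"
proof (rule rdisjI)
  \<comment> \<open>the positive part of \<open>Sup A\<close> is handled by infinite distributivity, its negative part is
    dominated by that of any element of \<open>A\<close>\<close>
  let ?s = "Sup A"
  have inf_zero: "inf (rabs a) (rabs y) = 0" if "a \<in> A" for a using disj[OF that] by (simp add: rdisj_def)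
  obtain a0 where a0: "a0 \<in> A" using A by auto
  have bdd: "bdd_above (riesz.pprt ` A)"
    using A(2) by (auto simp: bdd_above_def intro: riesz.pprt_mono)
  have "inf (rabs y) (riesz.pprt a) = 0" if "a \<in> A" for a
    using inf_mono[OF order_refl pprt_le_abs[of a], of "rabs y"] inf_zero[OF that]
    by (simp add: inf_commute antisym)
  then have "inf (rabs y) ` riesz.pprt ` A = {0}"
    using A(1) by (simp add: image_image image_constant_conv cong: image_cong)
  then have pos: "inf (riesz.pprt ?s) (rabs y) = 0"
    using A by (simp add: pprt_cSup inf_cSup_distrib[OF _ bdd] inf_commute)
  have "riesz.pprt (- ?s) \<le> riesz.pprt (- a0)"
    using a0 A by (intro riesz.pprt_mono) (simp add: cSup_upper)
  then have neg: "inf (riesz.pprt (- ?s)) (rabs y) \<le> 0"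
    using inf_mono[OF order.trans[OF _ pprt_neg_le_abs] order_refl] inf_zero[OF a0] by metis
  have "inf (rabs ?s) (rabs y) = inf (riesz.pprt ?s + riesz.pprt (- ?s)) (rabs y)"
    by (simp only: abs_eq_pprt_add_pprt_neg[of ?s])
  also have "\<dots> \<le> inf (riesz.pprt ?s) (rabs y) + inf (riesz.pprt (- ?s)) (rabs y)"
    by (rule inf_add_le_add_inf) simp_all
  also have "\<dots> \<le> 0" using pos neg by simp
  finally show "inf (rabs ?s) (rabs y) \<le> 0" .
qed

lemma riesz_ideal_0: "riesz_ideal B \<Longrightarrow> (0::'a::{ordered_real_vector,lattice}) \<in> B"
  by (simp add: riesz_ideal_def)

lemma riesz_ideal_add: "riesz_ideal B \<Longrightarrow> x \<in> B \<Longrightarrow> y \<in> B \<Longrightarrow> x + y \<in> (B::'a::{ordered_real_vector,lattice} set)"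
  by (simp add: riesz_ideal_def)

lemma riesz_ideal_scaleR: "riesz_ideal B \<Longrightarrow> x \<in> B \<Longrightarrow> c *\<^sub>R x \<in> (B::'a::{ordered_real_vector,lattice} set)"
  by (simp add: riesz_ideal_def)

lemma riesz_ideal_abs_le: "riesz_ideal B \<Longrightarrow> y \<in> B \<Longrightarrow> rabs x \<le> rabs y \<Longrightarrow> x \<in> (B::'a::{ordered_real_vector,lattice} set)"
  unfolding riesz_ideal_def by blast

lemma riesz_ideal_diff: "riesz_ideal B \<Longrightarrow> x \<in> B \<Longrightarrow> y \<in> B \<Longrightarrow> x - y \<in> (B::'a::{ordered_real_vector,lattice} set)"
  using riesz_ideal_add[of B x "(-1) *\<^sub>R y"] riesz_ideal_scaleR[of B y "-1"] by simp

lemma riesz_ideal_Int: "riesz_ideal B \<Longrightarrow> riesz_ideal C \<Longrightarrow> riesz_ideal (B \<inter> (C::'a::{ordered_real_vector,lattice} set))"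
  by (auto simp: riesz_ideal_def)

lemma riesz_ideal_disj_compl: "riesz_ideal (disj_compl (D::'a::{ordered_real_vector,lattice} set))"
  unfolding riesz_ideal_def disj_compl_def
  by (auto intro: rdisj_zero_left rdisj_add_left rdisj_scaleR_left rdisj_abs_le_left)

lemma subset_disj_compl_disj_compl: "B \<subseteq> disj_compl (disj_compl (B::'a::{ordered_real_vector,lattice} set))"
  unfolding disj_compl_def using rdisj_commute by blast

lemma disj_compl_antimono: "B \<subseteq> C \<Longrightarrow> disj_compl C \<subseteq> disj_compl (B::'a::{ordered_real_vector,lattice} set)"
  unfolding disj_compl_def by blast

lemma disj_compl_Int_eq_0: "x \<in> B \<Longrightarrow> x \<in> disj_compl B \<Longrightarrow> x = (0::'a::{ordered_real_vector,lattice})"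
  unfolding disj_compl_def using rdisj_self_imp_zero by blast

lemma band_imp_riesz_ideal: "band B \<Longrightarrow> riesz_ideal (B::'a::{ordered_real_vector,conditionally_complete_lattice} set)"
  by (simp add: band_def)

lemma band_cSup_mem:
  "band B \<Longrightarrow> A \<subseteq> B \<Longrightarrow> A \<noteq> {} \<Longrightarrow> bdd_above A \<Longrightarrow> Sup A \<in> (B::'a::{ordered_real_vector,conditionally_complete_lattice} set)"
  by (simp add: band_def)

lemma band_disj_compl: "band (disj_compl (D::'a::{ordered_real_vector,conditionally_complete_lattice} set))"
  unfolding band_def
proof (intro conjI allI impI riesz_ideal_disj_compl)
  fix A assume A: "A \<subseteq> disj_compl D \<and> A \<noteq> {} \<and> bdd_above A"
  show "Sup A \<in> disj_compl D" unfolding disj_compl_def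
  proof (intro CollectI ballI rdisj_cSup_left)
    fix y a assume "y \<in> D" "a \<in> A"
    with A show "rdisj a y" by (auto simp: disj_compl_def)
  qed (use A in simp_all)
qed

lemma band_Int:
  fixes B C :: "'a::{ordered_real_vector,conditionally_complete_lattice} set"
  assumes B: "band B" and C: "band C"
  shows "band (B \<inter> C)"
  unfolding band_def
proof (intro conjI allI impI)
  show "riesz_ideal (B \<inter> C)" using B C by (simp add: band_imp_riesz_ideal riesz_ideal_Int)
  fix A assume "A \<subseteq> B \<inter> C \<and> A \<noteq> {} \<and> bdd_above A"
  then show "Sup A \<in> B \<inter> C" using band_cSup_mem[OF B] band_cSup_mem[OF C] by simp
qed

section \<open>Band projections\<close>

definition band_projection_onto :: "'a::{ordered_real_vector,lattice} set \<Rightarrow> ('a \<Rightarrow> 'a) \<Rightarrow> bool" where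
  "band_projection_onto B P \<longleftrightarrow> (\<forall>x. P x \<in> B \<and> x - P x \<in> disj_compl B)"

lemma band_projection_iff: "band_projection P \<longleftrightarrow> (\<exists>B. band B \<and> band_projection_onto B P)"
  by (simp add: band_projection_def band_projection_onto_def)

context
  fixes B :: "'a::{ordered_real_vector,lattice} set" and P :: "'a \<Rightarrow> 'a"
  assumes ideal: "riesz_ideal B" and onto: "band_projection_onto B P"
begin

lemma band_projection_onto_mem: "P x \<in> B" and band_projection_onto_compl_mem: "x - P x \<in> disj_compl B"
  using onto by (simp_all add: band_projection_onto_def)

lemma band_projection_onto_eqI:
  assumes "b \<in> B" "x - b \<in> disj_compl B"
  shows "P x = b"
proof -
  have "P x - b \<in> B" by (rule riesz_ideal_diff[OF ideal band_projection_onto_mem assms(1)])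
  moreover have "P x - b = (x - b) - (x - P x)" by simp
  then have "P x - b \<in> disj_compl B"
    using riesz_ideal_diff[OF riesz_ideal_disj_compl assms(2) band_projection_onto_compl_mem[of x]] by simp
  ultimately show ?thesis using disj_compl_Int_eq_0 by force
qed

lemma band_projection_onto_add: "P (x + y) = P x + P y"
proof (rule band_projection_onto_eqI)
  show "P x + P y \<in> B" using ideal by (intro riesz_ideal_add band_projection_onto_mem)
  have "x + y - (P x + P y) = (x - P x) + (y - P y)" by simp
  then show "x + y - (P x + P y) \<in> disj_compl B"
    by (metis riesz_ideal_add[OF riesz_ideal_disj_compl] band_projection_onto_compl_mem)
qed

lemma band_projection_onto_scaleR: "P (c *\<^sub>R x) = c *\<^sub>R P x"
proof (rule band_projection_onto_eqI)
  show "c *\<^sub>R P x \<in> B" using ideal by (intro riesz_ideal_scaleR band_projection_onto_mem)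
  have "c *\<^sub>R x - c *\<^sub>R P x = c *\<^sub>R (x - P x)" by (simp add: scaleR_diff_right)
  then show "c *\<^sub>R x - c *\<^sub>R P x \<in> disj_compl B"
    by (metis riesz_ideal_scaleR[OF riesz_ideal_disj_compl] band_projection_onto_compl_mem)
qed

lemma band_projection_onto_fixes: "x \<in> B \<Longrightarrow> P x = x"
  by (rule band_projection_onto_eqI) (simp_all add: riesz_ideal_0[OF riesz_ideal_disj_compl])

lemma band_projection_onto_nonneg:
  assumes "0 \<le> x"
  shows "0 \<le> P x"
proof -
  \<comment> \<open>the negative part of \<open>P x\<close> lies in \<open>B\<close> and is dominated by \<open>x - P x\<close>, which is disjoint from \<open>B\<close>\<close>
  let ?n = "riesz.pprt (- P x)"
  have "?n \<in> B"
    using riesz_ideal_abs_le[OF ideal band_projection_onto_mem[of x]] pprt_neg_le_abs[of "P x"] by simp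
  then have "rdisj (x - P x) ?n" using band_projection_onto_compl_mem by (simp add: disj_compl_def)
  moreover have "?n \<le> rabs (x - P x)"
    using assms by (intro order.trans[OF _ pprt_le_abs] riesz.pprt_mono) simp
  ultimately have "inf ?n ?n = 0"
    using inf_mono[of ?n ?n ?n "rabs (x - P x)"] by (simp add: rdisj_def inf_commute antisym)
  then have "- P x \<le> 0" by (simp only: inf_idem riesz.le_zero_iff_zero_pprt)
  then show ?thesis by simp
qed

end

lemma band_projection_onto_diff:
  "riesz_ideal B \<Longrightarrow> band_projection_onto B P \<Longrightarrow> P (x - y) = P x - P y"
  using band_projection_onto_add[of B P "x - y" y] by simp

lemma band_projection_onto_compl:
  "band_projection_onto B P \<Longrightarrow> band_projection_onto (disj_compl B) (\<lambda>x. x - P x)"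
  using subset_disj_compl_disj_compl[of B] by (auto simp: band_projection_onto_def)

lemma band_projection_onto_le:
  assumes "riesz_ideal B" "band_projection_onto B P" "0 \<le> x"
  shows "P x \<le> x"
  using band_projection_onto_nonneg[OF riesz_ideal_disj_compl band_projection_onto_compl[OF assms(2)] assms(3)]
  by simp

lemma band_projection_onto_abs_le:
  assumes "riesz_ideal B" "band_projection_onto B P"
  shows "rabs (P x) \<le> rabs x"
proof -
  let ?p = "riesz.pprt x" and ?n = "riesz.pprt (- x)"
  have "P x = P ?p - P ?n" using band_projection_onto_diff[OF assms] pprt_minus_pprt_neg[of x] by metis
  then have "rabs (P x) \<le> rabs (P ?p) + rabs (P ?n)"
    using riesz.abs_triangle_ineq[of "P ?p" "- P ?n"] by simp
  also have "\<dots> = P ?p + P ?n" by (simp add: band_projection_onto_nonneg[OF assms])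
  also have "\<dots> \<le> ?p + ?n" by (intro add_mono band_projection_onto_le[OF assms]) simp_all
  finally show ?thesis by (simp add: abs_eq_pprt_add_pprt_neg)
qed

lemma band_projection_onto_comp:
  assumes B: "riesz_ideal B" "band_projection_onto B P" and C: "riesz_ideal C" "band_projection_onto C Q"
  shows "band_projection_onto (B \<inter> C) (\<lambda>x. P (Q x))"
  unfolding band_projection_onto_def
proof
  fix x
  have "P (Q x) \<in> C"
    using riesz_ideal_abs_le[OF C(1) band_projection_onto_mem[OF C]] band_projection_onto_abs_le[OF B] .
  then have "P (Q x) \<in> B \<inter> C" using band_projection_onto_mem[OF B] by blast
  moreover have "x - Q x \<in> disj_compl (B \<inter> C)" "Q x - P (Q x) \<in> disj_compl (B \<inter> C)"
    using band_projection_onto_compl_mem[OF C, of x] band_projection_onto_compl_mem[OF B, of "Q x"]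
      disj_compl_antimono[of "B \<inter> C" B] disj_compl_antimono[of "B \<inter> C" C] by auto
  then have "(x - Q x) + (Q x - P (Q x)) \<in> disj_compl (B \<inter> C)"
    by (intro riesz_ideal_add[OF riesz_ideal_disj_compl])
  ultimately show "P (Q x) \<in> B \<inter> C \<and> x - P (Q x) \<in> disj_compl (B \<inter> C)" by simp
qed

lemma band_projection_onto_unique:
  assumes "riesz_ideal B" "band_projection_onto B P" "band_projection_onto B Q"
  shows "P x = Q x"
  using assms(1,2) band_projection_onto_mem[OF assms(1,3)] band_projection_onto_compl_mem[OF assms(1,3)]
  by (rule band_projection_onto_eqI)

context
  fixes P :: "'a::{ordered_real_vector,conditionally_complete_lattice} \<Rightarrow> 'a"
  assumes P: "band_projection P"
begin

lemma band_projectionE: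
  obtains B where "riesz_ideal B" "band_projection_onto B P"
  using P band_imp_riesz_ideal by (auto simp: band_projection_iff)

lemma band_projection_add: "P (x + y) = P x + P y"
  by (metis band_projectionE band_projection_onto_add)

lemma band_projection_scaleR: "P (c *\<^sub>R x) = c *\<^sub>R P x"
  by (metis band_projectionE band_projection_onto_scaleR)

lemma band_projection_diff: "P (x - y) = P x - P y"
  by (metis band_projectionE band_projection_onto_diff)

lemma band_projection_0: "P 0 = 0"
  using band_projection_scaleR[of 0 0] by simp

lemma band_projection_sum: "P (sum g I) = (\<Sum>i\<in>I. P (g i))"
  by (induction I rule: infinite_finite_induct) (simp_all add: band_projection_0 band_projection_add)

lemma band_projection_nonneg: "0 \<le> x \<Longrightarrow> 0 \<le> P x"
  by (metis band_projectionE band_projection_onto_nonneg)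

lemma band_projection_le: "0 \<le> x \<Longrightarrow> P x \<le> x"
  by (metis band_projectionE band_projection_onto_le)

lemma band_projection_mono: "x \<le> y \<Longrightarrow> P x \<le> P y"
  using band_projection_nonneg[of "y - x"] by (simp add: band_projection_diff)

lemma band_projection_idem: "P (P x) = P x"
  by (metis band_projectionE band_projection_onto_fixes band_projection_onto_mem)

lemma band_projection_eq_0_if_weak_order_unit:
  assumes "weak_order_unit e" "P e = 0"
  shows "P x = 0"
proof -
  obtain B where B: "riesz_ideal B" "band_projection_onto B P" by (rule band_projectionE)
  have "e \<in> disj_compl B" using band_projection_onto_compl_mem[OF B, of e] assms(2) by simp
  then have "rdisj e (P x)" using band_projection_onto_mem[OF B, of x] by (simp add: disj_compl_def)
  then have "rdisj (P x) e" using rdisj_commute by blast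
  then show ?thesis using assms(1) by (simp add: weak_order_unit_def)
qed

end

lemma band_projection_comp:
  "band_projection P \<Longrightarrow> band_projection Q \<Longrightarrow> band_projection (\<lambda>x. P (Q x))"
  unfolding band_projection_iff by (metis band_Int band_imp_riesz_ideal band_projection_onto_comp)

lemma band_projection_commute:
  assumes "band_projection P" "band_projection Q"
  shows "P (Q x) = Q (P x)"
proof -
  obtain B C where B: "band B" "band_projection_onto B P" and C: "band C" "band_projection_onto C Q"
    using assms by (auto simp: band_projection_iff)
  have "band_projection_onto (B \<inter> C) (\<lambda>x. P (Q x))" "band_projection_onto (B \<inter> C) (\<lambda>x. Q (P x))"
    using B C band_projection_onto_comp[of C Q B P] by (simp_all add: band_imp_riesz_ideal band_projection_onto_comp Int_commute)
  with band_imp_riesz_ideal[OF band_Int[OF B(1) C(1)]] show ?thesis by (rule band_projection_onto_unique)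
qed

lemma band_projection_compl: "band_projection P \<Longrightarrow> band_projection (\<lambda>x. x - P x)"
  unfolding band_projection_iff using band_disj_compl band_projection_onto_compl by blast

lemma band_projection_zero_op: "band_projection (\<lambda>x::'a::{ordered_real_vector,conditionally_complete_lattice}. 0)"
proof -
  have "disj_compl (UNIV::'a set) = {0}"
    using rdisj_self_imp_zero rdisj_zero_left by (auto simp: disj_compl_def)
  moreover have "rdisj x 0" for x :: 'a using rdisj_zero_left rdisj_commute by blast
  ultimately have "band_projection_onto (disj_compl UNIV) (\<lambda>x::'a. 0)"
    by (simp add: band_projection_onto_def disj_compl_def[of "{0}"])
  then show ?thesis using band_disj_compl band_projection_iff by blast
qed

lemma band_projection_id: "band_projection (\<lambda>x::'a::{ordered_real_vector,conditionally_complete_lattice}. x)"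
  using band_projection_compl[OF band_projection_zero_op] by simp

lemma band_projection_scaleR_nonneg_if_unit:
  fixes e x :: "'a::{ordered_real_vector,conditionally_complete_lattice}"
  assumes A: "band_projection A" and e: "weak_order_unit e" and x: "0 \<le> x"
    and at_e: "0 \<le> A (c *\<^sub>R e)"
  shows "0 \<le> A (c *\<^sub>R x)"
proof (cases "0 \<le> c")
  case True
  with x show ?thesis by (simp add: band_projection_scaleR[OF A] band_projection_nonneg[OF A] scaleR_nonneg_nonneg)
next
  case False
  have "0 \<le> A e" using e by (simp add: band_projection_nonneg[OF A] weak_order_unit_def)
  moreover have "0 \<le> c *\<^sub>R A e" using at_e by (simp add: band_projection_scaleR[OF A])
  ultimately have "A e = 0" using False by (simp add: zero_le_scaleR_iff antisym)
  then show ?thesis using band_projection_eq_0_if_weak_order_unit[OF A e] by simp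
qed

\<comment> \<open>The auxiliary projection \<open>A\<close> localises the claim to a band, so that the induction can
  split along the band of each \<open>R i\<close> and its complement.\<close>
lemma band_projection_combination_nonneg:
  fixes e x :: "'a::{ordered_real_vector,conditionally_complete_lattice}"
    and R :: "nat \<Rightarrow> 'a \<Rightarrow> 'a" and c :: "nat \<Rightarrow> real"
  assumes e: "weak_order_unit e" and x: "0 \<le> x" and R: "\<And>i. i < m \<Longrightarrow> band_projection (R i)"
    and A: "band_projection A" and at_e: "0 \<le> A (c0 *\<^sub>R e + (\<Sum>i<m. c i *\<^sub>R R i e))"
  shows "0 \<le> A (c0 *\<^sub>R x + (\<Sum>i<m. c i *\<^sub>R R i x))"
  using R A at_e
proof (induction m arbitrary: A c0)
  case 0
  then show ?case using band_projection_scaleR_nonneg_if_unit[OF _ e x] by simp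
next
  case (Suc m)
  define Q where "Q = R m"
  have Q: "band_projection Q" and R: "\<And>i. i < m \<Longrightarrow> band_projection (R i)"
    using Suc.prems(1) by (simp_all add: Q_def)
  note A = Suc.prems(2)
  define S where "S z = c0 *\<^sub>R z + (\<Sum>i<m. c i *\<^sub>R R i z)" for z
  define T where "T z = (c0 + c m) *\<^sub>R z + (\<Sum>i<m. c i *\<^sub>R R i z)" for z
  \<comment> \<open>on the band of \<open>Q\<close> the operator acts like \<open>T\<close>, on its complement like \<open>S\<close>\<close>
  have F: "c0 *\<^sub>R z + (\<Sum>i<Suc m. c i *\<^sub>R R i z) = S z + c m *\<^sub>R Q z" for z
    by (simp add: S_def Q_def algebra_simps)
  have Q_F: "Q (S z + c m *\<^sub>R Q z) = Q (T z)" for z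
    by (simp add: S_def T_def band_projection_add[OF Q] band_projection_scaleR[OF Q] band_projection_idem[OF Q]
        band_projection_sum[OF Q] algebra_simps scaleR_add_left)
  have compl_F: "(S z + c m *\<^sub>R Q z) - Q (S z + c m *\<^sub>R Q z) = S z - Q (S z)" for z
    by (simp add: band_projection_add[OF Q] band_projection_scaleR[OF Q] band_projection_idem[OF Q])
  have F_e: "0 \<le> A (S e + c m *\<^sub>R Q e)" using Suc.prems(3) F by simp
  have "0 \<le> A (Q (T x))"
  proof -
    have "A (Q (T e)) = Q (A (S e + c m *\<^sub>R Q e))"
      by (simp only: Q_F[symmetric] band_projection_commute[OF A Q])
    then have "0 \<le> A (Q (T e))" using band_projection_nonneg[OF Q F_e] by simp
    then show ?thesis using Suc.IH[OF R band_projection_comp[OF A Q]] by (simp add: T_def)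
  qed
  moreover have "0 \<le> A (S x - Q (S x))"
  proof -
    have "0 \<le> A (S e + c m *\<^sub>R Q e) - Q (A (S e + c m *\<^sub>R Q e))"
      using band_projection_le[OF Q F_e] by simp
    then have "0 \<le> A (S e - Q (S e))"
      by (simp add: compl_F[symmetric] band_projection_diff[OF A] band_projection_commute[OF A Q])
    then show ?thesis using Suc.IH[OF R band_projection_comp[OF A band_projection_compl[OF Q]]] by (simp add: S_def)
  qed
  moreover have "A (S x + c m *\<^sub>R Q x) = A (Q (T x)) + A (S x - Q (S x))"
    by (simp add: Q_F[symmetric] compl_F[symmetric] band_projection_add[OF A, symmetric])
  ultimately show ?case using F by simp
qed

section \<open>Principal band projections\<close>

definition principal_band :: "'a::{ordered_real_vector,lattice} \<Rightarrow> 'a set" where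
  "principal_band u = disj_compl (disj_compl {u})"

\<comment> \<open>The choice is only meaningful where a projection onto the band exists, which is shown for
  \<open>0 \<le> u\<close> below.\<close>
definition principal_projection :: "'a::{ordered_real_vector,conditionally_complete_lattice} \<Rightarrow> 'a \<Rightarrow> 'a" where
  "principal_projection u = (SOME P. band_projection_onto (principal_band u) P)"

lemma band_principal_band: "band (principal_band (u::'a::{ordered_real_vector,conditionally_complete_lattice}))"
  by (simp add: principal_band_def band_disj_compl)

lemma riesz_ideal_principal_band: "riesz_ideal (principal_band (u::'a::{ordered_real_vector,conditionally_complete_lattice}))"
  by (simp add: band_imp_riesz_ideal band_principal_band)

lemma mem_principal_band: "u \<in> principal_band (u::'a::{ordered_real_vector,lattice})"
  using subset_disj_compl_disj_compl[of "{u}"] by (simp add: principal_band_def)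

lemma disj_compl_singleton_subset: "disj_compl {u} \<subseteq> disj_compl (principal_band (u::'a::{ordered_real_vector,lattice}))"
  by (simp add: principal_band_def subset_disj_compl_disj_compl)

lemma principal_band_mono:
  fixes u v :: "'a::{ordered_real_vector,lattice}"
  assumes "0 \<le> v" "v \<le> u"
  shows "principal_band v \<subseteq> principal_band u"
proof -
  have "disj_compl {u} \<subseteq> disj_compl {v}"
    using assms rdisj_abs_le_left[of v u] by (auto simp: disj_compl_def rdisj_commute)
  then show ?thesis unfolding principal_band_def by (rule disj_compl_antimono)
qed

lemma cSup_inf_multiples:
  fixes x u :: "'a::{ordered_real_vector,conditionally_complete_lattice}"
  assumes x: "0 \<le> x" and u: "0 \<le> u"
  defines "s \<equiv> Sup (range (\<lambda>k::nat. inf x (real k *\<^sub>R u)))"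
  shows "0 \<le> s" "s \<le> x" "rdisj (x - s) u"
proof -
  let ?g = "\<lambda>k::nat. inf x (real k *\<^sub>R u)"
  have bdd: "bdd_above (range ?g)" by (rule bdd_aboveI[of _ x]) auto
  have upper: "?g k \<le> s" for k unfolding s_def using bdd by (intro cSup_upper) auto
  show "s \<le> x" unfolding s_def by (rule cSup_least) auto
  moreover show "0 \<le> s" using upper[of 0] x by (simp add: inf_absorb2)
  define d where "d = inf (x - s) u"
  ultimately have d: "0 \<le> d" using u by (simp add: d_def)
  \<comment> \<open>adding \<open>d\<close> to the \<open>k\<close>-th term stays below the \<open>(k+1)\<close>-st, so \<open>s + d \<le> s\<close>\<close>
  have "?g k + d \<le> s" for k
  proof -
    have "?g k + d \<le> s + (x - s)" by (intro add_mono upper) (simp add: d_def)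
    moreover have "?g k + d \<le> real k *\<^sub>R u + u" by (intro add_mono) (simp_all add: d_def)
    ultimately have "?g k + d \<le> ?g (Suc k)" by (simp add: algebra_simps)
    then show ?thesis using upper[of "Suc k"] by (rule order_trans)
  qed
  then have "s \<le> s - d" unfolding s_def by (intro cSup_least) (auto simp: le_diff_eq)
  with d have "d = 0" by simp
  then show "rdisj (x - s) u"
    using \<open>s \<le> x\<close> u by (simp add: rdisj_def d_def)
qed

lemma cSup_inf_multiples_mem_principal_band:
  fixes x u :: "'a::{ordered_real_vector,conditionally_complete_lattice}"
  assumes x: "0 \<le> x" and u: "0 \<le> u"
  shows "Sup (range (\<lambda>k::nat. inf x (real k *\<^sub>R u))) \<in> principal_band u"
proof -
  have "inf x (real k *\<^sub>R u) \<in> principal_band u" for k :: nat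
  proof (rule riesz_ideal_abs_le[OF riesz_ideal_principal_band riesz_ideal_scaleR[OF riesz_ideal_principal_band mem_principal_band]])
    have "0 \<le> real k *\<^sub>R u" using u by (simp add: scaleR_nonneg_nonneg)
    then show "rabs (inf x (real k *\<^sub>R u)) \<le> rabs (real k *\<^sub>R u)" using x by simp
  qed
  moreover have "bdd_above (range (\<lambda>k::nat. inf x (real k *\<^sub>R u)))" by (rule bdd_aboveI[of _ x]) auto
  ultimately show ?thesis by (intro band_cSup_mem[OF band_principal_band]) auto
qed

lemma band_projection_onto_principal_band_exists:
  fixes u :: "'a::{ordered_real_vector,conditionally_complete_lattice}"
  assumes u: "0 \<le> u"
  shows "\<exists>P. band_projection_onto (principal_band u) P"
proof -
  define \<Phi> where "\<Phi> x = Sup (range (\<lambda>k::nat. inf x (real k *\<^sub>R u)))" for x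
  have \<Phi>_mem: "\<Phi> x \<in> principal_band u" if "0 \<le> x" for x
    unfolding \<Phi>_def using that u by (rule cSup_inf_multiples_mem_principal_band)
  have \<Phi>_compl_mem: "x - \<Phi> x \<in> disj_compl (principal_band u)" if "0 \<le> x" for x
    using cSup_inf_multiples(3)[OF that u] disj_compl_singleton_subset[of u]
    by (auto simp: \<Phi>_def disj_compl_def)
  define P where "P x = \<Phi> (riesz.pprt x) - \<Phi> (riesz.pprt (- x))" for x
  have "band_projection_onto (principal_band u) P"
    unfolding band_projection_onto_def
  proof
    fix x :: 'a
    let ?p = "riesz.pprt x" and ?n = "riesz.pprt (- x)"
    have "x - P x = (?p - ?n) - (\<Phi> ?p - \<Phi> ?n)" by (simp only: pprt_minus_pprt_neg P_def)
    also have "\<dots> = (?p - \<Phi> ?p) - (?n - \<Phi> ?n)" by (simp add: algebra_simps)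
    finally have "x - P x \<in> disj_compl (principal_band u)"
      by (simp add: riesz_ideal_diff[OF riesz_ideal_disj_compl] \<Phi>_compl_mem)
    moreover have "P x \<in> principal_band u"
      unfolding P_def by (intro riesz_ideal_diff[OF riesz_ideal_principal_band] \<Phi>_mem) simp_all
    ultimately show "P x \<in> principal_band u \<and> x - P x \<in> disj_compl (principal_band u)" by simp
  qed
  then show ?thesis by blast
qed

context
  fixes u :: "'a::{ordered_real_vector,conditionally_complete_lattice}"
  assumes u: "0 \<le> u"
begin

lemma principal_projection_onto: "band_projection_onto (principal_band u) (principal_projection u)"
  unfolding principal_projection_def
  using band_projection_onto_principal_band_exists[OF u] by (rule someI_ex)

lemma band_projection_principal_projection: "band_projection (principal_projection u)"
  using band_principal_band principal_projection_onto by (auto simp: band_projection_iff)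

lemma principal_projection_eqI:
  "b \<in> principal_band u \<Longrightarrow> x - b \<in> disj_compl (principal_band u) \<Longrightarrow> principal_projection u x = b"
  by (rule band_projection_onto_eqI[OF riesz_ideal_principal_band principal_projection_onto])

end

lemma principal_projection_pprt:
  "principal_projection (riesz.pprt v) v = riesz.pprt (v::'a::{ordered_real_vector,conditionally_complete_lattice})"
proof (rule principal_projection_eqI[OF riesz.zero_le_pprt mem_principal_band])
  have "v - riesz.pprt v = riesz.nprt v" by (rule diff_pprt_eq_nprt)
  moreover have "rdisj (riesz.nprt v) (riesz.pprt v)"
    using inf_pprt_pprt_neg[of v] by (simp add: rdisj_def riesz.pprt_neg[symmetric] inf_commute)
  ultimately have "rdisj (v - riesz.pprt v) (riesz.pprt v)" by simp
  then show "v - riesz.pprt v \<in> disj_compl (principal_band (riesz.pprt v))"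
    using disj_compl_singleton_subset by (auto simp: disj_compl_def)
qed

lemma principal_projection_absorb:
  fixes u v :: "'a::{ordered_real_vector,conditionally_complete_lattice}"
  assumes "0 \<le> v" "v \<le> u"
  shows "principal_projection u (principal_projection v x) = principal_projection v x"
proof -
  have u: "0 \<le> u" using assms by (rule order_trans)
  have "principal_projection v x \<in> principal_band u"
    using band_projection_onto_mem[OF riesz_ideal_principal_band principal_projection_onto[OF assms(1)]]
      principal_band_mono[OF assms] by blast
  then show ?thesis
    by (rule band_projection_onto_fixes[OF riesz_ideal_principal_band principal_projection_onto[OF u]])
qed

lemma principal_projection_mono_band:
  fixes u v x :: "'a::{ordered_real_vector,conditionally_complete_lattice}"
  assumes "0 \<le> v" "v \<le> u" "0 \<le> x"
  shows "principal_projection v x \<le> principal_projection u x"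
proof -
  have u: "0 \<le> u" using assms(1,2) by (rule order_trans)
  have "principal_projection v x = principal_projection u (principal_projection v x)"
    using principal_projection_absorb[OF assms(1,2)] by simp
  also have "\<dots> \<le> principal_projection u x"
    by (rule band_projection_mono[OF band_projection_principal_projection[OF u]
          band_projection_le[OF band_projection_principal_projection[OF assms(1)] assms(3)]])
  finally show ?thesis .
qed

context
  fixes a b :: "'a::{ordered_real_vector,conditionally_complete_lattice}"
begin

lemma principal_projection_pprt_diff_ge:
  "principal_projection (riesz.pprt (a - b)) b \<le> principal_projection (riesz.pprt (a - b)) a"
proof -
  have "principal_projection (riesz.pprt (a - b)) a - principal_projection (riesz.pprt (a - b)) b = riesz.pprt (a - b)"
    using principal_projection_pprt[of "a - b"]
      band_projection_diff[OF band_projection_principal_projection[OF riesz.zero_le_pprt], of "a - b" a b]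
    by simp
  then have "0 \<le> principal_projection (riesz.pprt (a - b)) a - principal_projection (riesz.pprt (a - b)) b"
    by simp
  then show ?thesis by simp
qed

lemma principal_projection_pprt_diff_compl_le:
  "a - principal_projection (riesz.pprt (a - b)) a \<le> b - principal_projection (riesz.pprt (a - b)) b"
proof -
  let ?Q = "principal_projection (riesz.pprt (a - b))"
  have "(a - ?Q a) - (b - ?Q b) = (a - b) - ?Q (a - b)"
    using band_projection_diff[OF band_projection_principal_projection[OF riesz.zero_le_pprt], of "a - b" a b]
    by simp
  also have "\<dots> = riesz.nprt (a - b)" by (simp add: principal_projection_pprt diff_pprt_eq_nprt)
  finally have "(a - ?Q a) - (b - ?Q b) \<le> 0" by simp
  then show ?thesis by simp
qed

end

lemma weak_order_unit_cSup_inf_multiples: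
  fixes e x :: "'a::{ordered_real_vector,conditionally_complete_lattice}"
  assumes "weak_order_unit e" "0 \<le> x"
  shows "Sup (range (\<lambda>k::nat. inf x (real k *\<^sub>R e))) = x"
proof -
  have "0 \<le> e" using assms(1) by (simp add: weak_order_unit_def)
  with assms(2) have "rdisj (x - Sup (range (\<lambda>k::nat. inf x (real k *\<^sub>R e)))) e"
    by (rule cSup_inf_multiples(3))
  then have "x - Sup (range (\<lambda>k::nat. inf x (real k *\<^sub>R e))) = 0"
    using assms(1) unfolding weak_order_unit_def by blast
  then show ?thesis by simp
qed

section \<open>Sequences decreasing to zero\<close>

definition decreases_to_zero :: "(nat \<Rightarrow> 'a::{ordered_real_vector,lattice}) \<Rightarrow> bool" where
  "decreases_to_zero y \<longleftrightarrow> decseq y \<and> (\<forall>n. 0 \<le> y n) \<and> (\<forall>z. (\<forall>n. z \<le> y n) \<longrightarrow> z \<le> 0)"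

lemma order_convergent_iff_dominated:
  "order_convergent x l \<longleftrightarrow> (\<exists>y. decreases_to_zero y \<and> (\<forall>n. rabs (x n - l) \<le> y n))"
  unfolding order_convergent_def decreases_to_zero_def by blast

context
  fixes y :: "nat \<Rightarrow> 'a::{ordered_real_vector,lattice}"
  assumes y: "decreases_to_zero y"
begin

lemma decreases_to_zero_nonneg: "0 \<le> y n"
  using y by (simp add: decreases_to_zero_def)

lemma decreases_to_zero_antimono: "m \<le> n \<Longrightarrow> y n \<le> y m"
  using y by (simp add: decreases_to_zero_def decseqD)

lemma decreases_to_zero_tail_lower_bound:
  assumes "\<And>n. n \<ge> N \<Longrightarrow> z \<le> y n"
  shows "z \<le> 0"
proof -
  have "z \<le> y n" for n
    using assms[of "max n N"] decreases_to_zero_antimono[of n "max n N"] by simp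
  then show ?thesis using y unfolding decreases_to_zero_def by blast
qed

lemma decreases_to_zero_scaleR:
  assumes "0 \<le> c"
  shows "decreases_to_zero (\<lambda>n. c *\<^sub>R y n)"
  unfolding decreases_to_zero_def
proof (intro conjI allI impI)
  show "decseq (\<lambda>n. c *\<^sub>R y n)"
    using assms decreases_to_zero_antimono by (auto simp: decseq_def intro: scaleR_left_mono)
  show "0 \<le> c *\<^sub>R y n" for n using assms decreases_to_zero_nonneg by (simp add: scaleR_nonneg_nonneg)
  fix z assume z: "\<forall>n. z \<le> c *\<^sub>R y n"
  show "z \<le> 0"
  proof (cases "c = 0")
    case False
    with assms have "(1 / c) *\<^sub>R z \<le> y n" for n
      using scaleR_left_mono[OF z[rule_format, of n], of "1 / c"] by simp
    then have "(1 / c) *\<^sub>R z \<le> 0" using y unfolding decreases_to_zero_def by blast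
    then have "c *\<^sub>R ((1 / c) *\<^sub>R z) \<le> 0" by (rule scaleR_nonneg_nonpos[OF assms])
    with False show ?thesis by simp
  qed (use z in auto)
qed

end

lemma decreases_to_zero_add:
  fixes u v :: "nat \<Rightarrow> 'a::{ordered_real_vector,lattice}"
  assumes u: "decreases_to_zero u" and v: "decreases_to_zero v"
  shows "decreases_to_zero (\<lambda>n. u n + v n)"
  unfolding decreases_to_zero_def
proof (intro conjI allI impI)
  show "decseq (\<lambda>n. u n + v n)"
    using u v by (auto simp: decseq_def intro: add_mono decreases_to_zero_antimono)
  show "0 \<le> u n + v n" for n using u v by (simp add: decreases_to_zero_nonneg)
  fix z assume z: "\<forall>n. z \<le> u n + v n"
  have "z - v m \<le> 0" for m
  proof (rule decreases_to_zero_tail_lower_bound[OF u])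
    fix n assume "m \<le> n"
    then have "z \<le> u n + v m" using z[rule_format, of n] decreases_to_zero_antimono[OF v]
      by (meson add_left_mono order_trans)
    then show "z - v m \<le> u n" by (simp add: diff_le_eq)
  qed
  then show "z \<le> 0" using v unfolding decreases_to_zero_def by simp
qed

lemma sum_decseq_le:
  fixes z :: "nat \<Rightarrow> 'a::{ordered_real_vector,lattice}"
  assumes z: "decseq z" "\<And>n. 0 \<le> z n" and "m \<le> n"
  shows "(\<Sum>k<n. z k) \<le> real m *\<^sub>R z 0 + real n *\<^sub>R z m"
proof -
  have "(\<Sum>k<n. z k) = (\<Sum>k<m. z k) + (\<Sum>k\<in>{m..<n}. z k)"
    using sum.atLeastLessThan_concat[of 0 m n z] \<open>m \<le> n\<close> by (simp add: lessThan_atLeast0)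
  also have "\<dots> \<le> (\<Sum>k<m. z 0) + (\<Sum>k\<in>{m..<n}. z m)"
    using z(1) by (intro add_mono sum_mono) (auto dest: decseqD)
  also have "\<dots> = real m *\<^sub>R z 0 + real (n - m) *\<^sub>R z m" by (simp add: sum_constant_scaleR)
  also have "\<dots> \<le> real m *\<^sub>R z 0 + real n *\<^sub>R z m"
    using z(2)[of m] by (intro add_left_mono scaleR_right_mono) auto
  finally show ?thesis .
qed

lemma cesaro_mean_le:
  fixes z :: "nat \<Rightarrow> 'a::{ordered_real_vector,lattice}"
  assumes z: "decseq z" "\<And>n. 0 \<le> z n" and "m \<le> n" "1 \<le> n"
  shows "(1 / real n) *\<^sub>R (\<Sum>k<n. z k) \<le> (1 / real n) *\<^sub>R (real m *\<^sub>R z 0) + z m"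
proof -
  have "(1 / real n) *\<^sub>R (\<Sum>k<n. z k) \<le> (1 / real n) *\<^sub>R (real m *\<^sub>R z 0 + real n *\<^sub>R z m)"
    using sum_decseq_le[OF z \<open>m \<le> n\<close>] by (simp add: scaleR_left_mono)
  with \<open>1 \<le> n\<close> show ?thesis by (simp add: scaleR_add_right)
qed

lemma decreases_to_zero_cesaro_majorant:
  fixes z :: "nat \<Rightarrow> 'a::{ordered_real_vector,conditionally_complete_lattice}"
  assumes z: "decreases_to_zero z"
  obtains v where "decreases_to_zero v" "\<And>n. (1 / real n) *\<^sub>R (\<Sum>k<n. z k) \<le> v n"
proof
  define C where "C n = (1 / real n) *\<^sub>R (\<Sum>k<n. z k)" for n
  have zdec: "decseq z" and z0: "\<And>n. 0 \<le> z n" using z by (simp_all add: decreases_to_zero_def)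
  have C_le: "C n \<le> (1 / real N) *\<^sub>R (real m *\<^sub>R z 0) + z m" if "m \<le> N" "N \<le> n" "1 \<le> N" for m n N
  proof -
    have "C n \<le> (1 / real n) *\<^sub>R (real m *\<^sub>R z 0) + z m"
      unfolding C_def using that by (intro cesaro_mean_le[OF zdec z0]) auto
    also have "\<dots> \<le> (1 / real N) *\<^sub>R (real m *\<^sub>R z 0) + z m"
      using that z0[of 0] by (intro add_right_mono scaleR_right_mono) (auto simp: frac_le scaleR_nonneg_nonneg)
    finally show ?thesis .
  qed
  have C_nonneg: "0 \<le> C n" for n unfolding C_def using z0 by (simp add: sum_nonneg scaleR_nonneg_nonneg)
  have "C n \<le> z 0" for n
    using C_le[of 0 "max n 1" n] C_nonneg[of n] z0[of 0] by (cases "n = 0") (auto simp: C_def)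
  then have bdd: "bdd_above (C ` {N..})" for N by (auto simp: bdd_above_def)
  define v where "v N = Sup (C ` {N..})" for N
  show "C n \<le> v n" for n unfolding v_def using bdd by (intro cSUP_upper) auto
  have v_le: "v N \<le> (1 / real N) *\<^sub>R (real m *\<^sub>R z 0) + z m" if "m \<le> N" "1 \<le> N" for m N
    unfolding v_def using that by (intro cSUP_least C_le) auto
  show "decreases_to_zero v" unfolding decreases_to_zero_def
  proof (intro conjI allI impI)
    show "decseq v" unfolding v_def decseq_Suc_iff using bdd by (auto intro!: cSUP_subset_mono)
    show "0 \<le> v n" for n using C_nonneg[of n] \<open>C n \<le> v n\<close> by (rule order_trans)
    fix w assume w: "\<forall>N. w \<le> v N"
    have "w - z m \<le> 0" if "1 \<le> m" for m
    proof (rule nonpos_if_le_inverse_multiples[where N = m and x = "real m *\<^sub>R z 0"])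
      fix N assume "m \<le> N"
      have "w \<le> v N" using w by simp
      also have "\<dots> \<le> (1 / real N) *\<^sub>R (real m *\<^sub>R z 0) + z m" using \<open>m \<le> N\<close> that by (intro v_le) auto
      finally show "w - z m \<le> (1 / real N) *\<^sub>R (real m *\<^sub>R z 0)" by (simp add: diff_le_eq)
    qed
    then show "w \<le> 0" using decreases_to_zero_tail_lower_bound[OF z, of 1] by simp
  qed
qed

section \<open>Order convergence of operators\<close>

lemma order_bounded_op_if_positive:
  assumes "linear S" "\<And>x. 0 \<le> x \<Longrightarrow> 0 \<le> S (x::'a::{ordered_real_vector,lattice})"
  shows "order_bounded_op S"
proof -
  have "S x \<le> S y" if "x \<le> y" for x y
    using assms(2)[of "y - x"] that by (simp add: linear_diff[OF assms(1)])
  then show ?thesis unfolding order_bounded_op_def using assms(1) by blast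
qed

lemma cINF_add_decseq:
  fixes a b :: "nat \<Rightarrow> 'a::{ordered_real_vector,conditionally_complete_lattice}"
  assumes "decseq a" "decseq b" "\<And>n. 0 \<le> a n" "\<And>n. 0 \<le> b n"
  shows "Inf (range (\<lambda>n. a n + b n)) = Inf (range a) + Inf (range b)"
proof (rule antisym)
  let ?I = "Inf (range (\<lambda>n. a n + b n))"
  have bdd: "bdd_below (range a)" "bdd_below (range b)" "bdd_below (range (\<lambda>n. a n + b n))"
    by (rule bdd_belowI2[where m = 0], simp add: assms add_nonneg_nonneg)+
  \<comment> \<open>since both sequences decrease, \<open>a m + b n\<close> dominates the term of index \<open>max m n\<close>\<close>
  have "?I - b n \<le> a m" for m n
  proof -
    have "?I \<le> a (max m n) + b (max m n)" by (rule cINF_lower[OF bdd(3) UNIV_I])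
    also have "\<dots> \<le> a m + b n"
      using decseqD[OF assms(1), of m "max m n"] decseqD[OF assms(2), of n "max m n"] by (simp add: add_mono)
    finally show ?thesis by (simp add: diff_le_eq)
  qed
  then have "?I - b n \<le> Inf (range a)" for n by (intro cINF_greatest) auto
  then have "?I - Inf (range a) \<le> b n" for n by (simp add: algebra_simps)
  then have "?I - Inf (range a) \<le> Inf (range b)" by (intro cINF_greatest) auto
  then show "?I \<le> Inf (range a) + Inf (range b)" by (simp add: algebra_simps)
  show "Inf (range a) + Inf (range b) \<le> ?I"
    by (intro cINF_greatest add_mono cINF_lower bdd) auto
qed

lemma cINF_scaleR:
  fixes a :: "nat \<Rightarrow> 'a::{ordered_real_vector,conditionally_complete_lattice}"
  assumes c: "0 \<le> c" and a: "\<And>n. 0 \<le> a n"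
  shows "Inf (range (\<lambda>n. c *\<^sub>R a n)) = c *\<^sub>R Inf (range a)"
proof (cases "c = 0")
  case False
  with c have c: "0 < c" by simp
  have bdd: "bdd_below (range a)" "bdd_below (range (\<lambda>n. c *\<^sub>R a n))"
    by (rule bdd_belowI2[where m = 0], simp add: a c scaleR_nonneg_nonneg less_imp_le)+
  have "(1 / c) *\<^sub>R Inf (range (\<lambda>n. c *\<^sub>R a n)) \<le> a n" for n
    using scaleR_left_mono[OF cINF_lower[OF bdd(2), of n], of "1 / c"] c by simp
  then have "(1 / c) *\<^sub>R Inf (range (\<lambda>n. c *\<^sub>R a n)) \<le> Inf (range a)" by (intro cINF_greatest) auto
  then have "Inf (range (\<lambda>n. c *\<^sub>R a n)) \<le> c *\<^sub>R Inf (range a)"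
    using scaleR_left_mono[of _ _ c] c by fastforce
  moreover have "c *\<^sub>R Inf (range a) \<le> Inf (range (\<lambda>n. c *\<^sub>R a n))"
    using c by (intro cINF_greatest scaleR_left_mono cINF_lower[OF bdd(1)]) auto
  ultimately show ?thesis by (rule antisym)
qed simp

definition cone_extension :: "('a::{ordered_real_vector,lattice} \<Rightarrow> 'b::real_vector) \<Rightarrow> 'a \<Rightarrow> 'b" where
  "cone_extension S0 a = S0 (riesz.pprt a) - S0 (riesz.pprt (- a))"

lemma cone_extension_uminus: "cone_extension S0 (- a) = - cone_extension S0 a"
  by (simp add: cone_extension_def)

context
  fixes S0 :: "'a::{ordered_real_vector,lattice} \<Rightarrow> 'b::real_vector"
  assumes add: "\<And>a b. 0 \<le> a \<Longrightarrow> 0 \<le> b \<Longrightarrow> S0 (a + b) = S0 a + S0 b"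
begin

lemma cone_extension_diff:
  assumes "0 \<le> p" "0 \<le> q"
  shows "cone_extension S0 (p - q) = S0 p - S0 q"
proof -
  have "riesz.pprt (p - q) + q = p + riesz.pprt (- (p - q))"
    using pprt_minus_pprt_neg[of "p - q"] by (simp add: algebra_simps)
  then have "S0 (riesz.pprt (p - q)) + S0 q = S0 p + S0 (riesz.pprt (- (p - q)))"
    using add assms by (metis riesz.zero_le_pprt)
  then show ?thesis by (simp add: cone_extension_def algebra_simps)
qed

lemma cone_extension_eq: "0 \<le> a \<Longrightarrow> cone_extension S0 a = S0 a"
  using cone_extension_diff[of a 0] add[of 0 0] by simp

lemma cone_extension_add: "cone_extension S0 (a + b) = cone_extension S0 a + cone_extension S0 b"
proof -
  let ?p = "riesz.pprt"
  have "a + b = (?p a + ?p b) - (?p (- a) + ?p (- b))"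
    using pprt_minus_pprt_neg[of a] pprt_minus_pprt_neg[of b] by (simp add: algebra_simps)
  then have "cone_extension S0 (a + b) = S0 (?p a + ?p b) - S0 (?p (- a) + ?p (- b))"
    by (simp only: cone_extension_diff add_nonneg_nonneg riesz.zero_le_pprt)
  then show ?thesis by (simp add: add cone_extension_def)
qed

lemma cone_extension_scaleR_nonneg:
  assumes hom: "\<And>a c. 0 \<le> a \<Longrightarrow> 0 \<le> c \<Longrightarrow> S0 (c *\<^sub>R a) = c *\<^sub>R S0 a" and "0 \<le> c"
  shows "cone_extension S0 (c *\<^sub>R a) = c *\<^sub>R cone_extension S0 a"
proof -
  let ?p = "riesz.pprt"
  have "c *\<^sub>R a = c *\<^sub>R ?p a - c *\<^sub>R ?p (- a)"
    using pprt_minus_pprt_neg[of a] by (simp add: scaleR_diff_right[symmetric])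
  then have "cone_extension S0 (c *\<^sub>R a) = S0 (c *\<^sub>R ?p a) - S0 (c *\<^sub>R ?p (- a))"
    using \<open>0 \<le> c\<close> by (simp only: cone_extension_diff scaleR_nonneg_nonneg riesz.zero_le_pprt)
  also have "\<dots> = c *\<^sub>R S0 (?p a) - c *\<^sub>R S0 (?p (- a))"
    using \<open>0 \<le> c\<close> by (simp only: hom riesz.zero_le_pprt)
  finally show ?thesis by (simp add: cone_extension_def scaleR_diff_right)
qed

lemma linear_cone_extension:
  assumes hom: "\<And>a c. 0 \<le> a \<Longrightarrow> 0 \<le> c \<Longrightarrow> S0 (c *\<^sub>R a) = c *\<^sub>R S0 a"
  shows "linear (cone_extension S0)"
proof (rule linearI)
  show "cone_extension S0 (a + b) = cone_extension S0 a + cone_extension S0 b" for a b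
    by (rule cone_extension_add)
  show "cone_extension S0 (c *\<^sub>R a) = c *\<^sub>R cone_extension S0 a" for c a
  proof (cases "0 \<le> c")
    case False
    have "c *\<^sub>R a = - ((- c) *\<^sub>R a)" by simp
    then have "cone_extension S0 (c *\<^sub>R a) = - cone_extension S0 ((- c) *\<^sub>R a)"
      by (metis cone_extension_uminus)
    also have "\<dots> = - ((- c) *\<^sub>R cone_extension S0 a)"
      using False cone_extension_scaleR_nonneg[OF hom, of "- c" a] by simp
    finally show ?thesis by simp
  qed (rule cone_extension_scaleR_nonneg[OF hom])
qed

end

lemma op_order_convergent_imp_pointwise:
  fixes Y :: "nat \<Rightarrow> 'a::{ordered_real_vector,conditionally_complete_lattice} \<Rightarrow> 'a"
  assumes bounded: "\<forall>n. order_bounded_op (Y n)" and dec: "\<forall>n. op_le (Y (Suc n)) (Y n)"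
    and nonneg: "\<forall>n. op_le (\<lambda>x. 0) (Y n)"
    and inf: "\<forall>S. order_bounded_op S \<and> (\<forall>n. op_le S (Y n)) \<longrightarrow> op_le S (\<lambda>x. 0)"
    and x: "0 \<le> x"
  shows "decreases_to_zero (\<lambda>n. Y n x)"
proof -
  have lin: "linear (Y n)" for n using bounded by (simp add: order_bounded_op_def)
  have Y_nonneg: "0 \<le> Y n a" if "0 \<le> a" for n a using nonneg that by (simp add: op_le_def)
  have Y_dec: "decseq (\<lambda>n. Y n a)" if "0 \<le> a" for a
    using dec that by (simp add: op_le_def decseq_Suc_iff)
  \<comment> \<open>the pointwise infimum of the \<open>Y n\<close> extends to a positive operator below all of them\<close>
  define S0 where "S0 a = Inf (range (\<lambda>n. Y n a))" for a
  have "S0 (a + b) = S0 a + S0 b" if "0 \<le> a" "0 \<le> b" for a b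
    unfolding S0_def linear_add[OF lin] using that by (intro cINF_add_decseq Y_dec Y_nonneg)
  moreover have "S0 (c *\<^sub>R a) = c *\<^sub>R S0 a" if "0 \<le> a" "0 \<le> c" for a c
    unfolding S0_def linear_cmul[OF lin] using that by (intro cINF_scaleR Y_nonneg)
  ultimately have ext: "linear (cone_extension S0)" and ext_eq: "\<And>a. 0 \<le> a \<Longrightarrow> cone_extension S0 a = S0 a"
    by (simp_all add: linear_cone_extension cone_extension_eq)
  have S0_le: "S0 a \<le> Y n a" if "0 \<le> a" for a n
    unfolding S0_def by (rule cINF_lower) (auto intro!: bdd_belowI2[where m = 0] Y_nonneg that)
  have S0_nonneg: "0 \<le> S0 a" if "0 \<le> a" for a
    unfolding S0_def by (rule cINF_greatest) (auto intro: Y_nonneg that)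
  have "order_bounded_op (cone_extension S0)"
    using ext by (rule order_bounded_op_if_positive) (simp add: ext_eq S0_nonneg)
  moreover have "\<forall>n. op_le (cone_extension S0) (Y n)" by (simp add: op_le_def ext_eq S0_le)
  ultimately have "cone_extension S0 x \<le> 0" using inf x by (auto simp: op_le_def)
  then have "S0 x \<le> 0" using ext_eq[OF x] by simp
  moreover have "w \<le> S0 x" if "\<forall>n. w \<le> Y n x" for w
    unfolding S0_def using that by (intro cINF_greatest) auto
  ultimately show ?thesis using Y_dec[OF x] Y_nonneg[OF x] by (auto simp: decreases_to_zero_def intro: order_trans)
qed

section \<open>From density zero projections to order null Cesaro means\<close>

lemma cesaro_order_null_if_density_zero:
  fixes f :: "nat \<Rightarrow> 'a::{ordered_real_vector,conditionally_complete_lattice}"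
  assumes f_nonneg: "\<And>n. 0 \<le> f n" and f_le: "\<And>n. f n \<le> b"
    and P: "\<And>n. band_projection (P n)" and "density_zero P"
    and "order_convergent (\<lambda>n. f n - P n (f n)) 0"
  shows "order_convergent (\<lambda>n. (1 / real n) *\<^sub>R (\<Sum>k<n. f k)) 0"
proof -
  have b: "0 \<le> b" using f_nonneg f_le by (rule order_trans)
  obtain Y where Y: "\<forall>n. order_bounded_op (Y n)" "\<forall>n. op_le (Y (Suc n)) (Y n)"
      "\<forall>n. op_le (\<lambda>x. 0) (Y n)" "\<forall>S. order_bounded_op S \<and> (\<forall>n. op_le S (Y n)) \<longrightarrow> op_le S (\<lambda>x. 0)"
    and Y_ge: "\<And>n x. 0 \<le> x \<Longrightarrow> (1 / real n) *\<^sub>R (\<Sum>k<n. P k x) \<le> Y n x"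
    using \<open>density_zero P\<close> unfolding density_zero_def op_order_convergent_def op_le_def by auto
  have u: "decreases_to_zero (\<lambda>n. Y n b)" using Y b by (rule op_order_convergent_imp_pointwise)
  obtain z where z: "decreases_to_zero z" and z_ge: "\<And>n. rabs (f n - P n (f n)) \<le> z n"
    using \<open>order_convergent _ 0\<close> unfolding order_convergent_iff_dominated by auto
  obtain v where v: "decreases_to_zero v" and v_ge: "\<And>n. (1 / real n) *\<^sub>R (\<Sum>k<n. z k) \<le> v n"
    using decreases_to_zero_cesaro_majorant[OF z] by blast
  have "rabs ((1 / real n) *\<^sub>R (\<Sum>k<n. f k) - 0) \<le> Y n b + v n" for n
  proof -
    have "(\<Sum>k<n. f k) = (\<Sum>k<n. P k (f k)) + (\<Sum>k<n. f k - P k (f k))"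
      by (simp add: sum.distrib[symmetric])
    also have "\<dots> \<le> (\<Sum>k<n. P k b) + (\<Sum>k<n. z k)"
      using z_ge by (intro add_mono sum_mono band_projection_mono[OF P] f_le)
        (auto intro: order_trans[OF riesz.abs_ge_self])
    finally have "(1 / real n) *\<^sub>R (\<Sum>k<n. f k) \<le>
        (1 / real n) *\<^sub>R (\<Sum>k<n. P k b) + (1 / real n) *\<^sub>R (\<Sum>k<n. z k)"
      by (simp add: scaleR_left_mono scaleR_add_right[symmetric])
    also have "\<dots> \<le> Y n b + v n" using Y_ge[OF b] v_ge by (rule add_mono)
    finally show ?thesis using f_nonneg by (simp add: sum_nonneg scaleR_nonneg_nonneg)
  qed
  then show ?thesis
    unfolding order_convergent_iff_dominated using decreases_to_zero_add[OF u v] by blast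
qed

section \<open>Construction of density zero projections\<close>

locale cesaro_null =
  fixes e :: "'a::{ordered_real_vector,conditionally_complete_lattice}" and f y :: "nat \<Rightarrow> 'a"
  assumes weak_unit: "weak_order_unit e" and f_nonneg: "\<And>n. 0 \<le> f n" and y: "decreases_to_zero y"
    and cesaro_le: "\<And>n. (1 / real n) *\<^sub>R (\<Sum>k<n. f k) \<le> y n"
begin

text \<open>In the notation of the introduction, \<open>level j n\<close> is \<open>T j n\<close>, \<open>majorant n\<close> is \<open>Y n\<close>,
  \<open>proj n\<close> is \<open>P n\<close>, and \<open>proj_mean n\<close> (defined further below) is \<open>D n\<close>.\<close>

definition eps :: "nat \<Rightarrow> real" where
  "eps j = (1 / 2) ^ j"

definition level :: "nat \<Rightarrow> nat \<Rightarrow> 'a \<Rightarrow> 'a" where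
  "level j n = principal_projection (riesz.pprt (y n - (eps j)\<^sup>2 *\<^sub>R e))"

definition majorant :: "nat \<Rightarrow> 'a \<Rightarrow> 'a" where
  "majorant n x = eps n *\<^sub>R x + (\<Sum>j<n. eps (Suc j) *\<^sub>R level (Suc j) n x)"

definition threshold :: "nat \<Rightarrow> 'a" where
  "threshold n = majorant n e"

definition proj :: "nat \<Rightarrow> 'a \<Rightarrow> 'a" where
  "proj n = principal_projection (riesz.pprt (f n - threshold n))"

lemma e_nonneg: "0 \<le> e"
  using weak_unit by (simp add: weak_order_unit_def)

lemma eps_pos: "0 < eps j"
  by (simp add: eps_def)

lemma sum_eps_Suc: "m \<le> n \<Longrightarrow> (\<Sum>j\<in>{m..<n}. eps (Suc j)) = eps m - eps n"
proof -
  assume "m \<le> n"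
  have "(\<Sum>j\<in>{m..<n}. eps (Suc j)) = - (\<Sum>j\<in>{m..<n}. eps (Suc j) - eps j)"
    by (simp add: eps_def sum_negf[symmetric])
  with \<open>m \<le> n\<close> show ?thesis by (simp add: sum_Suc_diff')
qed

lemma eps_sq_antimono: "i \<le> j \<Longrightarrow> (eps j)\<^sup>2 \<le> (eps i)\<^sup>2"
  by (simp add: eps_def power_decreasing power_mono)

lemma band_projection_level: "band_projection (level j n)"
  by (simp add: level_def band_projection_principal_projection)

lemma level_le_generator: "i \<le> j \<Longrightarrow> riesz.pprt (y n - (eps i)\<^sup>2 *\<^sub>R e) \<le> riesz.pprt (y n - (eps j)\<^sup>2 *\<^sub>R e)"
  using e_nonneg by (intro riesz.pprt_mono diff_left_mono scaleR_right_mono eps_sq_antimono)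

lemma level_absorb:
  assumes "i \<le> j"
  shows "level j n (level i n x) = level i n x" "level i n (level j n x) = level i n x"
proof -
  show *: "level j n (level i n x) = level i n x"
    unfolding level_def using level_le_generator[OF assms] by (simp add: principal_projection_absorb)
  show "level i n (level j n x) = level i n x"
    using * band_projection_commute[OF band_projection_level band_projection_level] by metis
qed

lemma level_mono_index: "i \<le> j \<Longrightarrow> 0 \<le> x \<Longrightarrow> level i n x \<le> level j n x"
  unfolding level_def using level_le_generator by (simp add: principal_projection_mono_band)

lemma level_antimono_time: "m \<le> n \<Longrightarrow> 0 \<le> x \<Longrightarrow> level j n x \<le> level j m x"
  unfolding level_def using y e_nonneg
  by (intro principal_projection_mono_band riesz.pprt_mono diff_right_mono decreases_to_zero_antimono) simp_all

lemma level_unit_le: "(eps j)\<^sup>2 *\<^sub>R level j n e \<le> y n"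
proof -
  have "(eps j)\<^sup>2 *\<^sub>R level j n e \<le> level j n (y n)"
    using principal_projection_pprt_diff_ge[of "y n" "(eps j)\<^sup>2 *\<^sub>R e"]
    by (simp add: level_def band_projection_scaleR[OF band_projection_principal_projection])
  also have "\<dots> \<le> y n" using y by (simp add: band_projection_le[OF band_projection_level] decreases_to_zero_nonneg)
  finally show ?thesis .
qed

lemma level_compl_le: "y n - level j n (y n) \<le> (eps j)\<^sup>2 *\<^sub>R (e - level j n e)"
  using principal_projection_pprt_diff_compl_le[of "y n" "(eps j)\<^sup>2 *\<^sub>R e"]
  by (simp add: level_def band_projection_scaleR[OF band_projection_principal_projection] scaleR_diff_right)

lemma level_tail_null:
  assumes x: "0 \<le> x" and w: "\<And>n. n \<ge> J \<Longrightarrow> w \<le> level J n x"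
  shows "w \<le> 0"
proof -
  \<comment> \<open>cut \<open>x\<close> at \<open>k e\<close>: the part below is controlled by \<open>y\<close>, the part above vanishes as \<open>k \<rightarrow> \<infinity>\<close>\<close>
  have "w \<le> x - inf x (real k *\<^sub>R e)" for k :: nat
  proof -
    let ?c = "real k / (eps J)\<^sup>2"
    have "w - (x - inf x (real k *\<^sub>R e)) \<le> 0"
    proof (rule decreases_to_zero_tail_lower_bound[OF decreases_to_zero_scaleR[OF y]])
      show "0 \<le> ?c" by simp
      fix n assume "J \<le> n"
      have "level J n x = level J n (inf x (real k *\<^sub>R e)) + level J n (x - inf x (real k *\<^sub>R e))"
        by (metis band_projection_add[OF band_projection_level] add.commute diff_add_cancel)
      also have "\<dots> \<le> real k *\<^sub>R level J n e + (x - inf x (real k *\<^sub>R e))"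
      proof (rule add_mono)
        show "level J n (inf x (real k *\<^sub>R e)) \<le> real k *\<^sub>R level J n e"
          by (simp add: band_projection_mono[OF band_projection_level] band_projection_scaleR[OF band_projection_level, symmetric])
        have "0 \<le> x - inf x (real k *\<^sub>R e)" by (simp only: diff_ge_0_iff_ge inf_le1)
        then show "level J n (x - inf x (real k *\<^sub>R e)) \<le> x - inf x (real k *\<^sub>R e)"
          by (rule band_projection_le[OF band_projection_level])
      qed
      also have "real k *\<^sub>R level J n e = ?c *\<^sub>R ((eps J)\<^sup>2 *\<^sub>R level J n e)"
        using eps_pos[of J] by simp
      also have "\<dots> \<le> ?c *\<^sub>R y n" by (intro scaleR_left_mono level_unit_le) simp
      finally show "w - (x - inf x (real k *\<^sub>R e)) \<le> ?c *\<^sub>R y n"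
        using w[OF \<open>J \<le> n\<close>] by (simp add: diff_le_eq add.commute)
    qed
    then show ?thesis by simp
  qed
  then have "inf x (real k *\<^sub>R e) \<le> x - w" for k :: nat by (metis add.commute le_diff_eq)
  then have "Sup (range (\<lambda>k::nat. inf x (real k *\<^sub>R e))) \<le> x - w" by (intro cSup_least) auto
  then show ?thesis using weak_order_unit_cSup_inf_multiples[OF weak_unit x] by simp
qed

lemma linear_majorant: "linear (majorant n)"
  by (rule linearI)
    (simp_all add: majorant_def band_projection_add[OF band_projection_level] band_projection_scaleR[OF band_projection_level]
      scaleR_add_right sum.distrib scaleR_sum_right algebra_simps)

lemma majorant_nonneg: "0 \<le> x \<Longrightarrow> 0 \<le> majorant n x"
  unfolding majorant_def using eps_pos
  by (intro add_nonneg_nonneg sum_nonneg scaleR_nonneg_nonneg band_projection_nonneg[OF band_projection_level])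
    (simp_all add: less_imp_le)

lemma majorant_Suc_le:
  assumes x: "0 \<le> x"
  shows "majorant (Suc n) x \<le> majorant n x"
proof -
  have "majorant (Suc n) x =
      eps (Suc n) *\<^sub>R x + ((\<Sum>j<n. eps (Suc j) *\<^sub>R level (Suc j) (Suc n) x) + eps (Suc n) *\<^sub>R level (Suc n) (Suc n) x)"
    by (simp add: majorant_def)
  also have "\<dots> \<le> eps (Suc n) *\<^sub>R x + ((\<Sum>j<n. eps (Suc j) *\<^sub>R level (Suc j) n x) + eps (Suc n) *\<^sub>R x)"
    using eps_pos x
    by (intro add_left_mono add_mono sum_mono scaleR_left_mono level_antimono_time band_projection_le[OF band_projection_level])
      (simp_all add: less_imp_le)
  also have "\<dots> = majorant n x" by (simp add: majorant_def eps_def algebra_simps scaleR_add_left[symmetric])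
  finally show ?thesis .
qed

lemma majorant_le_level:
  assumes "J \<le> n" and x: "0 \<le> x"
  shows "majorant n x \<le> eps J *\<^sub>R x + level J n x"
proof -
  have "(\<Sum>j<J. eps (Suc j) *\<^sub>R level (Suc j) n x) \<le> (\<Sum>j<J. eps (Suc j) *\<^sub>R level J n x)"
    using eps_pos x by (intro sum_mono scaleR_left_mono level_mono_index) (simp_all add: less_imp_le)
  also have "\<dots> = (1 - eps J) *\<^sub>R level J n x"
    using sum_eps_Suc[of 0 J] by (simp add: scaleR_sum_left[symmetric] lessThan_atLeast0 eps_def)
  also have "\<dots> \<le> level J n x"
    using eps_pos[of J] band_projection_nonneg[OF band_projection_level x]
    by (simp add: scaleR_left_diff_distrib scaleR_nonneg_nonneg less_imp_le)
  finally have low: "(\<Sum>j<J. eps (Suc j) *\<^sub>R level (Suc j) n x) \<le> level J n x" .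
  have "(\<Sum>j\<in>{J..<n}. eps (Suc j) *\<^sub>R level (Suc j) n x) \<le> (\<Sum>j\<in>{J..<n}. eps (Suc j) *\<^sub>R x)"
    using eps_pos x by (intro sum_mono scaleR_left_mono band_projection_le[OF band_projection_level]) (simp_all add: less_imp_le)
  also have "\<dots> = (eps J - eps n) *\<^sub>R x" using sum_eps_Suc[OF \<open>J \<le> n\<close>] by (simp add: scaleR_sum_left[symmetric])
  finally have high: "(\<Sum>j\<in>{J..<n}. eps (Suc j) *\<^sub>R level (Suc j) n x) \<le> (eps J - eps n) *\<^sub>R x" .
  have "(\<Sum>j<n. eps (Suc j) *\<^sub>R level (Suc j) n x) =
      (\<Sum>j<J. eps (Suc j) *\<^sub>R level (Suc j) n x) + (\<Sum>j\<in>{J..<n}. eps (Suc j) *\<^sub>R level (Suc j) n x)"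
    using sum.atLeastLessThan_concat[of 0 J n "\<lambda>j. eps (Suc j) *\<^sub>R level (Suc j) n x"] \<open>J \<le> n\<close>
    by (simp add: lessThan_atLeast0)
  then show ?thesis using add_mono[OF low high] by (simp add: majorant_def algebra_simps)
qed

lemma majorant_null:
  assumes x: "0 \<le> x"
  shows "decreases_to_zero (\<lambda>n. majorant n x)"
  unfolding decreases_to_zero_def
proof (intro conjI allI impI)
  show "decseq (\<lambda>n. majorant n x)" using majorant_Suc_le[OF x] by (simp add: decseq_Suc_iff)
  show "0 \<le> majorant n x" for n using x by (rule majorant_nonneg)
  fix w assume w: "\<forall>n. w \<le> majorant n x"
  have "w - eps J *\<^sub>R x \<le> 0" for J
    using w majorant_le_level[OF _ x] x
    by (intro level_tail_null[of x J]) (auto simp: diff_le_eq add.commute intro: order_trans)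
  then have "w \<le> (1 / real J) *\<^sub>R x" if "1 \<le> J" for J
  proof -
    have "eps J \<le> 1 / real J" using that
      by (simp add: eps_def power_one_over field_simps of_nat_less_two_power less_imp_le)
    then show ?thesis using \<open>w - eps J *\<^sub>R x \<le> 0\<close> x by (metis diff_le_0_iff_le order_trans scaleR_right_mono)
  qed
  then show "w \<le> 0" by (rule nonpos_if_le_inverse_multiples)
qed

lemma threshold_null: "decreases_to_zero threshold"
  unfolding threshold_def[abs_def] using e_nonneg by (rule majorant_null)

lemma band_projection_proj: "band_projection (proj n)"
  by (simp add: proj_def band_projection_principal_projection)

lemma proj_threshold_le: "proj n (threshold n) \<le> proj n (f n)"
  unfolding proj_def by (rule principal_projection_pprt_diff_ge)

lemma compl_proj_le_threshold: "f n - proj n (f n) \<le> threshold n"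
proof -
  have "f n - proj n (f n) \<le> threshold n - proj n (threshold n)"
    unfolding proj_def by (rule principal_projection_pprt_diff_compl_le)
  also have "\<dots> \<le> threshold n"
    using band_projection_nonneg[OF band_projection_proj] threshold_null by (simp add: decreases_to_zero_nonneg)
  finally show ?thesis .
qed

definition level_ext :: "nat \<Rightarrow> nat \<Rightarrow> 'a \<Rightarrow> 'a" where
  "level_ext n j = (if j = 0 then (\<lambda>x. 0) else if j \<le> n then level j n else (\<lambda>x. x))"

definition layer :: "nat \<Rightarrow> nat \<Rightarrow> 'a \<Rightarrow> 'a" where
  "layer n j x = level_ext n (Suc j) (x - level_ext n j x)"

definition proj_mean :: "nat \<Rightarrow> 'a \<Rightarrow> 'a" where
  "proj_mean n x = (1 / real n) *\<^sub>R (\<Sum>k<n. proj k x)"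

lemma band_projection_level_ext: "band_projection (level_ext n j)"
  by (simp add: level_ext_def band_projection_zero_op band_projection_id band_projection_level)

lemma level_ext_absorb:
  assumes "i \<le> j"
  shows "level_ext n j (level_ext n i x) = level_ext n i x" "level_ext n i (level_ext n j x) = level_ext n i x"
proof -
  have "level_ext n j (level_ext n i x) = level_ext n i x \<and> level_ext n i (level_ext n j x) = level_ext n i x"
  proof (cases "i = 0")
    case True
    then show ?thesis using band_projection_0[OF band_projection_level_ext, of n j] by (simp add: level_ext_def)
  next
    case False
    with assms show ?thesis by (cases "j \<le> n") (simp_all add: level_ext_def level_absorb)
  qed
  then show "level_ext n j (level_ext n i x) = level_ext n i x" "level_ext n i (level_ext n j x) = level_ext n i x"
    by simp_all
qed

lemma band_projection_layer: "band_projection (layer n j)"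
  unfolding layer_def[abs_def]
  by (rule band_projection_comp[OF band_projection_level_ext band_projection_compl[OF band_projection_level_ext]])

lemma layer_eq_diff: "layer n j x = level_ext n (Suc j) x - level_ext n j x"
  using level_ext_absorb(1)[of j "Suc j" n x]
  by (simp add: layer_def band_projection_diff[OF band_projection_level_ext])

lemma sum_layers: "(\<Sum>j<Suc n. layer n j x) = x"
proof -
  have "(\<Sum>j<Suc n. layer n j x) = level_ext n (Suc n) x - level_ext n 0 x"
    unfolding layer_eq_diff by (rule sum_lessThan_telescope)
  then show ?thesis by (simp add: level_ext_def)
qed

lemma layer_level_ext: "layer n j (level_ext n (Suc i) x) = (if j \<le> i then layer n j x else 0)"
  using level_ext_absorb[of "Suc j" "Suc i" n x] level_ext_absorb[of j "Suc i" n x]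
    level_ext_absorb[of "Suc i" "Suc j" n x] level_ext_absorb[of "Suc i" j n x]
  by (simp add: layer_eq_diff)

lemma layer_majorant:
  assumes "j \<le> n"
  shows "layer n j (majorant n x) = eps j *\<^sub>R layer n j x"
proof -
  let ?L = "layer n j"
  have "majorant n x = eps n *\<^sub>R x + (\<Sum>i<n. eps (Suc i) *\<^sub>R level_ext n (Suc i) x)"
    unfolding majorant_def by (rule arg_cong[where f = "\<lambda>s. _ + s"], rule sum.cong) (simp_all add: level_ext_def)
  then have "?L (majorant n x) = eps n *\<^sub>R ?L x + (\<Sum>i<n. eps (Suc i) *\<^sub>R ?L (level_ext n (Suc i) x))"
    by (simp only: band_projection_add[OF band_projection_layer] band_projection_scaleR[OF band_projection_layer]
        band_projection_sum[OF band_projection_layer])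
  also have "\<dots> = eps n *\<^sub>R ?L x + (\<Sum>i<n. eps (Suc i) *\<^sub>R (if j \<le> i then ?L x else 0))"
    by (simp only: layer_level_ext)
  also have "(\<Sum>i<n. eps (Suc i) *\<^sub>R (if j \<le> i then ?L x else 0)) = (\<Sum>i\<in>{j..<n}. eps (Suc i)) *\<^sub>R ?L x"
  proof -
    have "{..<n} \<inter> {i. j \<le> i} = {j..<n}" by auto
    then show ?thesis by (simp add: if_distrib[of "\<lambda>v. _ *\<^sub>R v"] sum.If_cases scaleR_sum_left)
  qed
  also have "eps n *\<^sub>R ?L x + (\<Sum>i\<in>{j..<n}. eps (Suc i)) *\<^sub>R ?L x = eps j *\<^sub>R ?L x"
    using sum_eps_Suc[OF assms] by (simp add: scaleR_add_left[symmetric])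
  finally show ?thesis .
qed

lemma layer_y_le:
  assumes "1 \<le> j" "j \<le> n"
  shows "layer n j (y n) \<le> (eps j)\<^sup>2 *\<^sub>R layer n j e"
proof -
  have "layer n j (y n) = level_ext n (Suc j) (y n - level j n (y n))"
    using assms by (simp add: layer_def level_ext_def)
  also have "\<dots> \<le> level_ext n (Suc j) ((eps j)\<^sup>2 *\<^sub>R (e - level j n e))"
    by (rule band_projection_mono[OF band_projection_level_ext level_compl_le])
  also have "\<dots> = (eps j)\<^sup>2 *\<^sub>R level_ext n (Suc j) (e - level j n e)"
    by (rule band_projection_scaleR[OF band_projection_level_ext])
  also have "\<dots> = (eps j)\<^sup>2 *\<^sub>R layer n j e"
    using assms by (simp add: layer_def level_ext_def)
  finally show ?thesis .
qed

lemma linear_proj_mean: "linear (proj_mean n)"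
  by (rule linearI)
    (simp_all add: proj_mean_def band_projection_add[OF band_projection_proj] band_projection_scaleR[OF band_projection_proj]
      sum.distrib scaleR_add_right scaleR_sum_right)

lemma proj_mean_nonneg: "0 \<le> x \<Longrightarrow> 0 \<le> proj_mean n x"
  unfolding proj_mean_def by (simp add: scaleR_nonneg_nonneg sum_nonneg band_projection_nonneg[OF band_projection_proj])

lemma proj_mean_le:
  assumes "1 \<le> n" "0 \<le> x"
  shows "proj_mean n x \<le> x"
proof -
  have "proj_mean n x \<le> (1 / real n) *\<^sub>R (\<Sum>k<n. x)"
    unfolding proj_mean_def using assms(2) by (intro scaleR_left_mono sum_mono band_projection_le[OF band_projection_proj]) simp_all
  with assms(1) show ?thesis by (simp add: sum_constant_scaleR)
qed

lemma proj_mean_layer: "proj_mean n (layer m j x) = layer m j (proj_mean n x)"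
  by (simp add: proj_mean_def band_projection_scaleR[OF band_projection_layer] band_projection_sum[OF band_projection_layer]
      band_projection_commute[OF band_projection_proj band_projection_layer])

lemma proj_mean_threshold_le: "proj_mean n (threshold n) \<le> y n"
proof -
  have "proj k (threshold n) \<le> f k" if "k < n" for k
  proof -
    have "proj k (threshold n) \<le> proj k (threshold k)"
      using that threshold_null by (intro band_projection_mono[OF band_projection_proj] decreases_to_zero_antimono) simp_all
    also have "\<dots> \<le> proj k (f k)" by (rule proj_threshold_le)
    also have "\<dots> \<le> f k" by (rule band_projection_le[OF band_projection_proj f_nonneg])
    finally show ?thesis .
  qed
  then have "proj_mean n (threshold n) \<le> (1 / real n) *\<^sub>R (\<Sum>k<n. f k)"
    unfolding proj_mean_def by (intro scaleR_left_mono sum_mono) simp_all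
  then show ?thesis using cesaro_le by (rule order_trans)
qed

lemma proj_mean_unit_le:
  assumes "1 \<le> n"
  shows "proj_mean n e \<le> threshold n"
proof -
  \<comment> \<open>compare both sides layer by layer; on layer \<open>j\<close> the threshold is \<open>eps j\<close> times \<open>e\<close>\<close>
  have "layer n j (proj_mean n e) \<le> layer n j (threshold n)" if "j < Suc n" for j
  proof (cases "j = 0")
    case True
    have "layer n j (proj_mean n e) = proj_mean n (layer n j e)" by (simp add: proj_mean_layer)
    also have "\<dots> \<le> layer n j e"
      by (rule proj_mean_le[OF assms band_projection_nonneg[OF band_projection_layer e_nonneg]])
    also have "\<dots> = layer n j (threshold n)" using True by (simp add: threshold_def layer_majorant eps_def)
    finally show ?thesis .
  next
    case False
    then have j: "1 \<le> j" "j \<le> n" using that by auto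
    have "eps j *\<^sub>R layer n j (proj_mean n e) = layer n j (proj_mean n (threshold n))"
      using j by (simp add: threshold_def proj_mean_layer[symmetric] layer_majorant linear_cmul[OF linear_proj_mean])
    also have "\<dots> \<le> layer n j (y n)"
      by (rule band_projection_mono[OF band_projection_layer proj_mean_threshold_le])
    also have "\<dots> \<le> eps j *\<^sub>R (eps j *\<^sub>R layer n j e)" using layer_y_le[OF j] by (simp add: power2_eq_square)
    finally have "layer n j (proj_mean n e) \<le> eps j *\<^sub>R layer n j e"
      using scaleR_le_cancel_left_pos[OF eps_pos] by blast
    also have "\<dots> = layer n j (threshold n)" using j by (simp add: threshold_def layer_majorant)
    finally show ?thesis .
  qed
  then have "(\<Sum>j<Suc n. layer n j (proj_mean n e)) \<le> (\<Sum>j<Suc n. layer n j (threshold n))"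
    by (intro sum_mono) simp
  then show ?thesis by (simp only: sum_layers)
qed

lemma proj_mean_le_majorant:
  assumes x: "0 \<le> x"
  shows "proj_mean n x \<le> majorant n x"
proof (cases "n = 0")
  case True
  then show ?thesis using majorant_nonneg[OF x] by (simp add: proj_mean_def)
next
  case False
  \<comment> \<open>\<open>majorant n - proj_mean n\<close> is a combination of commuting band projections that is positive at \<open>e\<close>\<close>
  define R where "R i = (if i < n then level (Suc i) n else proj (i - n))" for i
  define c where "c i = (if i < n then eps (Suc i) else - (1 / real n))" for i
  have R: "band_projection (R i)" for i by (simp add: R_def band_projection_level band_projection_proj)
  have diff: "eps n *\<^sub>R z + (\<Sum>i<n + n. c i *\<^sub>R R i z) = majorant n z - proj_mean n z" for z
  proof -
    let ?G = "\<lambda>i. c i *\<^sub>R R i z"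
    have "(\<Sum>i<n + n. ?G i) = (\<Sum>i<n. ?G i) + (\<Sum>i\<in>{n..<n + n}. ?G i)"
      using sum.atLeastLessThan_concat[of 0 n "n + n" ?G] by (simp add: atLeast0LessThan)
    also have "(\<Sum>i\<in>{n..<n + n}. ?G i) = (\<Sum>i<n. ?G (n + i))"
      by (simp add: sum.atLeastLessThan_shift_0 atLeast0LessThan comp_def)
    also have "(\<Sum>i<n. ?G i) + (\<Sum>i<n. ?G (n + i)) = (\<Sum>i<n. eps (Suc i) *\<^sub>R level (Suc i) n z) - proj_mean n z"
      by (simp add: c_def R_def proj_mean_def scaleR_sum_right sum_negf)
    finally show ?thesis by (simp add: majorant_def)
  qed
  have "0 \<le> eps n *\<^sub>R e + (\<Sum>i<n + n. c i *\<^sub>R R i e)"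
    using proj_mean_unit_le False by (simp add: diff threshold_def)
  then have "0 \<le> eps n *\<^sub>R x + (\<Sum>i<n + n. c i *\<^sub>R R i x)"
    using band_projection_combination_nonneg[OF weak_unit x R band_projection_id] by simp
  then show ?thesis by (simp add: diff)
qed

lemma density_zero_proj: "density_zero proj"
  unfolding density_zero_def op_order_convergent_def
proof (intro exI[of _ majorant] conjI allI impI)
  fix n
  show "order_bounded_op (majorant n)" using linear_majorant majorant_nonneg by (rule order_bounded_op_if_positive)
  show "op_le (majorant (Suc n)) (majorant n)" by (simp add: op_le_def majorant_Suc_le)
  show "op_le (\<lambda>x. 0) (majorant n)" by (simp add: op_le_def majorant_nonneg)
  show "op_le (\<lambda>x. (1 / real n) *\<^sub>R (\<Sum>k<n. proj k x) - 0) (majorant n)"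
    using proj_mean_le_majorant by (simp add: op_le_def proj_mean_def)
  show "op_le (\<lambda>x. 0 - (1 / real n) *\<^sub>R (\<Sum>k<n. proj k x)) (majorant n)"
    using proj_mean_nonneg majorant_nonneg by (auto simp: op_le_def proj_mean_def intro: order_trans[of _ 0])
next
  fix S assume "order_bounded_op S \<and> (\<forall>n. op_le S (majorant n))"
  then show "op_le S (\<lambda>x. 0)" using majorant_null by (auto simp: op_le_def decreases_to_zero_def)
qed

lemma order_convergent_compl_proj: "order_convergent (\<lambda>n. f n - proj n (f n)) 0"
  unfolding order_convergent_iff_dominated
  using threshold_null compl_proj_le_threshold band_projection_le[OF band_projection_proj f_nonneg] by auto

end

theorem theorem3p2:
  fixes e :: "'a::{ordered_real_vector,conditionally_complete_lattice}"
    and f :: "nat \<Rightarrow> 'a"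
  assumes "weak_order_unit e"
    and "\<forall>n. 0 \<le> f n"
    and "\<exists>b. \<forall>n. f n \<le> b"
  shows "order_convergent (\<lambda>n. (1 / real n) *\<^sub>R (\<Sum>k<n. f k)) 0 \<longleftrightarrow>
    (\<exists>P. (\<forall>n. band_projection (P n)) \<and> density_zero P
         \<and> order_convergent (\<lambda>n. f n - P n (f n)) 0)"
proof
  assume "order_convergent (\<lambda>n. (1 / real n) *\<^sub>R (\<Sum>k<n. f k)) 0"
  then obtain y where "decreases_to_zero y" "\<And>n. rabs ((1 / real n) *\<^sub>R (\<Sum>k<n. f k) - 0) \<le> y n"
    unfolding order_convergent_iff_dominated by auto
  then interpret cesaro_null e f y
    using assms(1,2) by unfold_locales (auto intro: order_trans[OF riesz.abs_ge_self])
  show "\<exists>P. (\<forall>n. band_projection (P n)) \<and> density_zero P \<and> order_convergent (\<lambda>n. f n - P n (f n)) 0"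
    using band_projection_proj density_zero_proj order_convergent_compl_proj by blast
next
  assume "\<exists>P. (\<forall>n. band_projection (P n)) \<and> density_zero P \<and> order_convergent (\<lambda>n. f n - P n (f n)) 0"
  with assms(2,3) show "order_convergent (\<lambda>n. (1 / real n) *\<^sub>R (\<Sum>k<n. f k)) 0"
    using cesaro_order_null_if_density_zero by blast
qed

end
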